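(* Let $0<\varepsilon<1$ and suppose that $\psi\in\mathcal C_2(\varepsilon)$ satisfies: (1) $\psi$ has no zeros on the imaginary axis; (2) $\psi(i\xi+\eta)\to1$ as $\xi\to\pm\infty$, uniformly for $-\varepsilon<\eta<\varepsilon$; (3) the winding number of $\{\psi(i\xi):-\infty\le\xi\le\infty\}$ is zero; (4) $\psi(z)=1+O(1/|z|^{1/2+\delta})$ as $|z|\to\infty$ for some $0<\delta\le1/2$. Then there exists $0<\varepsilon'<\varepsilon$ such that $\psi$ has a Wiener--Hopf factorization $\psi=\psi_-\psi_+$ on $\{-\varepsilon'<\Re z<\varepsilon'\}$ such that (i) $\psi_-$ is bounded, holomorphic and free from zeros on $\{z:\Re z<\varepsilon'/2\}$; (ii) $\psi_+$ is bounded, holomorphic and free from zeros on $\{z:\Re z>-\varepsilon'/2\}$; (iii) $\psi_\pm(\eta+i\xi)=1+O(1/|z|^{(1+\delta)/2})$ as $\xi\to\pm\infty$, uniformly for $-\varepsilon'/\varepsilon<\eta<\varepsilon'/\varepsilon$.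
   Context: $\mathcal C_2^0(\varepsilon)$ is the space of functions $f$ bounded and analytic on $\{z:|\Re z|<\varepsilon\}$ such that $f(\eta+i\xi)\to0$ as $\xi\to\pm\infty$ uniformly for $|\eta|\le\varepsilon/2$, and $\sup_{|\eta|<\varepsilon/2}\int_{-\infty}^\infty|f(\eta+i\xi)|^2d\xi<\infty$; $\mathcal C_2(\varepsilon)=\mathcal C_2^0(\varepsilon)+\mathbb C$. *)

theory Defs
  imports "HOL-Complex_Analysis.Complex_Analysis"
begin

definition strip :: "real \<Rightarrow> complex set" where
  "strip e = {z. \<bar>Re z\<bar> < e}"

definition C2_0 :: "real \<Rightarrow> (complex \<Rightarrow> complex) \<Rightarrow> bool" where
  "C2_0 e f \<longleftrightarrow>
     bounded (f ` strip e) \<and>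
     f analytic_on strip e \<and>
     (\<forall>d>0. \<exists>R. \<forall>\<eta> \<xi>. \<bar>\<eta>\<bar> \<le> e/2 \<and> \<bar>\<xi>\<bar> \<ge> R \<longrightarrow> cmod (f (Complex \<eta> \<xi>)) < d) \<and>
     (SUP \<eta>\<in>{-e/2<..<e/2}. \<integral>\<^sup>+ \<xi>. ennreal ((cmod (f (Complex \<eta> \<xi>)))\<^sup>2) \<partial>lborel) < \<infinity>"

definition C2 :: "real \<Rightarrow> (complex \<Rightarrow> complex) \<Rightarrow> bool" where
  "C2 e g \<longleftrightarrow> (\<exists>f c. C2_0 e f \<and> (\<forall>z\<in>strip e. g z = f z + c))"

(* The closed curve xi \<mapsto> g(i xi), -\<infinity> \<le> xi \<le> \<infinity>, reparametrised over [0,1]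
   via xi = tan(pi (t - 1/2)); the endpoints t = 0, 1 correspond to xi = \<mp>\<infinity>,
   where the value is the limit 1. *)
definition imag_axis_loop :: "(complex \<Rightarrow> complex) \<Rightarrow> real \<Rightarrow> complex" where
  "imag_axis_loop g t = (if t \<le> 0 \<or> t \<ge> 1 then 1 else g (Complex 0 (tan (pi * (t - 1/2)))))"

end

(* Since psi has no zeros on the imaginary axis and tends to 1 at both ends of the strip, it is
   zero-free on a thin strip |Re z| < a and has a holomorphic logarithm f there. The vanishing
   winding number forces the branches of f near +i oo and -i oo to agree, so f = Ln psi far out
   and f = O(|Im z|^-(1/2+delta)). Cauchy's formula on tall rectangles, whose horizontal sides
   contribute nothing in the limit, splits f = g + h into the Cauchy integrals of f along the
   lines Re w = c and Re w = -c. Each is holomorphic off its line and, since the decay exponent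
   of f exceeds 1/2, is O((1+|Im z|)^-beta) with beta = (1+delta)/2. Then psi_- = exp g and
   psi_+ = exp h. *)

theory Submission
  imports Defs
begin

lemma open_strip: "open (strip e)"
proof -
  have "strip e = {z. Re z > -e} \<inter> {z. Re z < e}" by (auto simp: strip_def)
  then show ?thesis by (simp add: open_Int open_halfspace_Re_lt open_halfspace_Re_gt)
qed

lemma convex_strip: "convex (strip e)"
proof -
  have "strip e = {z. Re z > -e} \<inter> {z. Re z < e}" by (auto simp: strip_def)
  then show ?thesis by (simp add: convex_Int convex_halfspace_Re_lt convex_halfspace_Re_gt)
qed

lemma C2_holomorphic:
  assumes "C2 e \<psi>"
  shows "\<psi> holomorphic_on strip e"
proof -
  obtain f c where f: "C2_0 e f" and eq: "\<And>z. z \<in> strip e \<Longrightarrow> \<psi> z = f z + c"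
    using assms unfolding C2_def by blast
  have "f holomorphic_on strip e"
    using f unfolding C2_0_def by (simp add: analytic_imp_holomorphic)
  then have "(\<lambda>z. f z + c) holomorphic_on strip e" by (intro holomorphic_intros)
  then show ?thesis by (rule holomorphic_transform) (use eq in auto)
qed

lemma powr_neg_le_one:
  fixes x \<beta> :: real
  assumes "1 \<le> x" "0 \<le> \<beta>"
  shows "x powr (-\<beta>) \<le> 1"
  using assms by (simp add: powr_minus divide_simps) (smt (verit) ge_one_powr_ge_zero)

text \<open>With \<open>A = 1+|t|\<close>, \<open>B = 1+|t - Im z|\<close>, \<open>X = 1+|Im z|\<close>: the Cauchy kernel gives up
  decay \<open>X\<^sup>-\<^sup>\<beta>\<close> in \<open>z\<close> at the cost of a still integrable decay in \<open>t\<close>.\<close>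
lemma powr_quotient_le_split:
  fixes A B X \<alpha> \<beta> :: real
  assumes A: "1 \<le> A" and B: "1 \<le> B" and X: "1 \<le> X" and XAB: "X \<le> 2 * max A B"
    and ab: "0 < \<beta>" "\<beta> < \<alpha>" "\<alpha> \<le> 1"
  shows "A powr (-\<alpha>) / B \<le> 2 powr \<beta> * X powr (-\<beta>) * (A powr (-(1+\<alpha>-\<beta>)) + B powr (-(1+\<alpha>-\<beta>)))"
proof -
  have X2: "X powr (-\<beta>) * 2 powr \<beta> = (X/2) powr (-\<beta>)"
    using X by (simp add: powr_divide powr_minus divide_simps)
  have pA: "0 \<le> A powr (-(1+\<alpha>-\<beta>))" "0 \<le> B powr (-(1+\<alpha>-\<beta>))" by auto
  show ?thesis
  proof (cases "A \<le> B")
    case True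
    then have XB: "X/2 \<le> B" using XAB by auto
    have "B powr (-(1-\<beta>)) * B powr (-\<beta>) = B powr (-1)"
      using B by (simp add: powr_add[symmetric])
    then have "A powr (-\<alpha>) / B = A powr (-\<alpha>) * B powr (-(1-\<beta>)) * B powr (-\<beta>)"
      using B by (simp add: powr_minus divide_simps mult.assoc)
    also have "\<dots> \<le> A powr (-\<alpha>) * A powr (-(1-\<beta>)) * (X/2) powr (-\<beta>)"
    proof (intro mult_mono)
      show "B powr (-(1-\<beta>)) \<le> A powr (-(1-\<beta>))"
        by (rule powr_mono2') (use A True ab in auto)
      show "B powr (-\<beta>) \<le> (X/2) powr (-\<beta>)"
        by (rule powr_mono2') (use X XB ab in auto)
    qed auto
    also have "\<dots> = A powr (-(1+\<alpha>-\<beta>)) * (X/2) powr (-\<beta>)"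
      by (simp add: powr_add[symmetric] algebra_simps)
    also have "\<dots> \<le> (A powr (-(1+\<alpha>-\<beta>)) + B powr (-(1+\<alpha>-\<beta>))) * (X/2) powr (-\<beta>)"
      using pA by (intro mult_right_mono) auto
    finally show ?thesis using X2 by (metis mult.commute mult.assoc)
  next
    case False
    then have XA: "X/2 \<le> A" using XAB by auto
    have "A powr (-\<beta>) * A powr (-(\<alpha>-\<beta>)) = A powr (-\<alpha>)"
      using A by (simp add: powr_add[symmetric])
    then have "A powr (-\<alpha>) / B = A powr (-\<beta>) * A powr (-(\<alpha>-\<beta>)) * B powr (-1)"
      using B by (simp add: powr_minus_divide)
    also have "\<dots> \<le> (X/2) powr (-\<beta>) * B powr (-(\<alpha>-\<beta>)) * B powr (-1)"
    proof (intro mult_mono)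
      show "A powr (-(\<alpha>-\<beta>)) \<le> B powr (-(\<alpha>-\<beta>))"
        by (rule powr_mono2') (use B False ab in auto)
      show "A powr (-\<beta>) \<le> (X/2) powr (-\<beta>)"
        by (rule powr_mono2') (use X XA ab in auto)
    qed auto
    also have "\<dots> = B powr (-(1+\<alpha>-\<beta>)) * (X/2) powr (-\<beta>)"
    proof -
      have "B powr (-(\<alpha>-\<beta>)) * B powr (-1) = B powr (-(1+\<alpha>-\<beta>))"
        unfolding powr_add[symmetric] by (rule arg_cong[where f="(powr) B"]) simp
      then show ?thesis by (metis mult.commute mult.left_commute)
    qed
    also have "\<dots> \<le> (A powr (-(1+\<alpha>-\<beta>)) + B powr (-(1+\<alpha>-\<beta>))) * (X/2) powr (-\<beta>)"
      using pA by (intro mult_right_mono) auto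
    finally show ?thesis using X2 by (metis mult.commute mult.assoc)
  qed
qed

lemma kernel_has_integral_right:
  fixes p s x y :: real
  assumes p: "p > 1" and sx: "s \<le> x" and xy: "x \<le> y"
  shows "((\<lambda>t. (1+\<bar>t-s\<bar>) powr (-p)) has_integral
          (((1+(x-s)) powr (1-p) - (1+(y-s)) powr (1-p))/(p-1))) {x..y}"
proof -
  define F where "F t = -((1+(t-s)) powr (1-p)) / (p-1)" for t
  have "((\<lambda>t. (1+(t-s)) powr (-p)) has_integral (F y - F x)) {x..y}"
  proof (rule fundamental_theorem_of_calculus[OF xy])
    fix t assume t: "t \<in> {x..y}"
    then have pos: "0 < 1 + (t - s)" using sx by auto
    have "((\<lambda>t. -((1+(t-s)) powr (1-p)) / (p-1)) has_real_derivative
            (- ((1-p) * (1+(t-s)) powr (1-p-1) * 1) / (p-1))) (at t within {x..y})"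
      using pos p by (auto intro!: derivative_eq_intros)
    moreover have "(- ((1-p) * (1+(t-s)) powr (1-p-1) * 1) / (p-1)) = (1+(t-s)) powr (-p)"
      using p by (simp add: field_simps)
    ultimately show "(F has_vector_derivative (1+(t-s)) powr (-p)) (at t within {x..y})"
      unfolding F_def by (simp add: has_real_derivative_iff_has_vector_derivative)
  qed
  moreover have "F y - F x = ((1+(x-s)) powr (1-p) - (1+(y-s)) powr (1-p))/(p-1)"
    unfolding F_def by (simp add: diff_divide_distrib)
  ultimately show ?thesis
    by (rule_tac has_integral_eq[rotated]) (use sx in auto)
qed

lemma kernel_has_integral_left:
  fixes p s x y :: real
  assumes p: "p > 1" and sy: "y \<le> s" and xy: "x \<le> y"
  shows "((\<lambda>t. (1+\<bar>t-s\<bar>) powr (-p)) has_integral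
          (((1+(s-y)) powr (1-p) - (1+(s-x)) powr (1-p))/(p-1))) {x..y}"
proof -
  define F where "F t = (1+(s-t)) powr (1-p) / (p-1)" for t
  have "((\<lambda>t. (1+(s-t)) powr (-p)) has_integral (F y - F x)) {x..y}"
  proof (rule fundamental_theorem_of_calculus[OF xy])
    fix t assume t: "t \<in> {x..y}"
    then have pos: "0 < 1 + (s - t)" using sy by auto
    have "((\<lambda>t. (1+(s-t)) powr (1-p) / (p-1)) has_real_derivative
            (((1-p) * (1+(s-t)) powr (1-p-1) * (-1)) / (p-1))) (at t within {x..y})"
      using pos p by (auto intro!: derivative_eq_intros)
    moreover have "(((1-p) * (1+(s-t)) powr (1-p-1) * (-1)) / (p-1)) = (1+(s-t)) powr (-p)"
    proof -
      have "p - 1 \<noteq> 0" using p by simp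
      then show ?thesis by (simp add: field_simps)
    qed
    ultimately show "(F has_vector_derivative (1+(s-t)) powr (-p)) (at t within {x..y})"
      unfolding F_def by (simp add: has_real_derivative_iff_has_vector_derivative)
  qed
  moreover have "F y - F x = ((1+(s-y)) powr (1-p) - (1+(s-x)) powr (1-p))/(p-1)"
    unfolding F_def by (simp add: diff_divide_distrib)
  ultimately show ?thesis
    by (rule_tac has_integral_eq[rotated]) (use sy in auto)
qed

lemma kernel_integrable:
  fixes p s a b :: real
  shows "(\<lambda>t. (1+\<bar>t-s\<bar>) powr (-p)) integrable_on {a..b}"
  by (intro integrable_continuous_interval continuous_intros) auto

lemma kernel_integral_le:
  fixes p s a b :: real
  assumes p: "p > 1"
  shows "integral {a..b} (\<lambda>t. (1+\<bar>t-s\<bar>) powr (-p)) \<le> 2/(p-1)"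
proof (cases "a \<le> b")
  case False
  then show ?thesis using p by simp
next
  case True
  define a' where "a' = min a s"
  define b' where "b' = max b s"
  have "integral {a..b} (\<lambda>t. (1+\<bar>t-s\<bar>) powr (-p)) \<le> integral {a'..b'} (\<lambda>t. (1+\<bar>t-s\<bar>) powr (-p))"
    by (rule integral_subset_le) (auto simp: a'_def b'_def kernel_integrable)
  also have "\<dots> = integral {a'..s} (\<lambda>t. (1+\<bar>t-s\<bar>) powr (-p)) + integral {s..b'} (\<lambda>t. (1+\<bar>t-s\<bar>) powr (-p))"
    by (rule Henstock_Kurzweil_Integration.integral_combine[symmetric]) (auto simp: a'_def b'_def kernel_integrable)
  also have "\<dots> = ((1+(s-s)) powr (1-p) - (1+(s-a')) powr (1-p))/(p-1) +
                  ((1+(s-s)) powr (1-p) - (1+(b'-s)) powr (1-p))/(p-1)"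
    using kernel_has_integral_left[OF p, of s s a'] kernel_has_integral_right[OF p, of s s b']
    by (auto simp: a'_def b'_def integral_unique)
  also have "\<dots> \<le> 1/(p-1) + 1/(p-1)"
    using p by (intro add_mono divide_right_mono) auto
  finally show ?thesis by simp
qed

lemma kernel_tail_integral_right_le:
  fixes p n a b :: real
  assumes p: "p > 1" and n: "0 \<le> n" "n \<le> a" and ab: "a \<le> b"
  shows "integral {a..b} (\<lambda>t. (1+\<bar>t\<bar>) powr (-p)) \<le> (1+n) powr (1-p)/(p-1)"
proof -
  have "integral {a..b} (\<lambda>t. (1+\<bar>t-0\<bar>) powr (-p)) = ((1+(a-0)) powr (1-p) - (1+(b-0)) powr (1-p))/(p-1)"
    using kernel_has_integral_right[OF p, of 0 a b] n ab by (auto simp: integral_unique)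
  also have "\<dots> \<le> (1+a) powr (1-p)/(p-1)"
    using p by (intro divide_right_mono) auto
  also have "\<dots> \<le> (1+n) powr (1-p)/(p-1)"
    using p n by (intro divide_right_mono powr_mono2') auto
  finally show ?thesis by simp
qed

lemma kernel_tail_integral_left_le:
  fixes p n a b :: real
  assumes p: "p > 1" and n: "0 \<le> n" "b \<le> -n" and ab: "a \<le> b"
  shows "integral {a..b} (\<lambda>t. (1+\<bar>t\<bar>) powr (-p)) \<le> (1+n) powr (1-p)/(p-1)"
proof -
  have "integral {a..b} (\<lambda>t. (1+\<bar>t-0\<bar>) powr (-p)) = ((1+(0-b)) powr (1-p) - (1+(0-a)) powr (1-p))/(p-1)"
    using kernel_has_integral_left[OF p, of b 0 a] n ab by (auto simp: integral_unique)
  also have "\<dots> \<le> (1-b) powr (1-p)/(p-1)"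
    using p by (intro divide_right_mono) auto
  also have "\<dots> \<le> (1+n) powr (1-p)/(p-1)"
    using p n by (intro divide_right_mono powr_mono2') auto
  finally show ?thesis by simp
qed

lemma norm_cauchy_integrand_le:
  fixes F :: "complex \<Rightarrow> complex" and c K \<alpha> \<beta> d t :: real and z :: complex
  assumes Kb: "\<And>t. cmod (F (Complex c t)) \<le> K * (1+\<bar>t\<bar>) powr (-\<alpha>)" and K: "0 \<le> K"
    and ab: "0<\<beta>" "\<beta><\<alpha>" "\<alpha>\<le>1" and d: "0 < d" "d \<le> \<bar>Re z - c\<bar>"
  shows "cmod (F (Complex c t) / (Complex c t - z)) \<le>
     (2*K/min d 1) * 2 powr \<beta> * (1+\<bar>Im z\<bar>) powr (-\<beta>) *
       ((1+\<bar>t\<bar>) powr (-(1+\<alpha>-\<beta>)) + (1+\<bar>t - Im z\<bar>) powr (-(1+\<alpha>-\<beta>)))"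
proof -
  define D where "D = cmod (Complex c t - z)"
  define m where "m = min d 1"
  have m: "0 < m" "m \<le> 1" "m \<le> d" using d by (auto simp: m_def)
  have D1: "\<bar>c - Re z\<bar> \<le> D" unfolding D_def using abs_Re_le_cmod[of "Complex c t - z"] by simp
  have D2: "\<bar>t - Im z\<bar> \<le> D" unfolding D_def using abs_Im_le_cmod[of "Complex c t - z"] by simp
  have DB: "m * (1+\<bar>t - Im z\<bar>) / 2 \<le> D"
  proof (cases "\<bar>t - Im z\<bar> \<le> 1")
    case True
    then have "m * (1+\<bar>t - Im z\<bar>) / 2 \<le> m" using m by (auto simp: field_simps)
    also have "\<dots> \<le> D" using m D1 d by auto
    finally show ?thesis .
  next
    case False
    have "m * (1+\<bar>t - Im z\<bar>) \<le> 1 * (1+\<bar>t - Im z\<bar>)"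
      using m by (intro mult_right_mono) auto
    then have "m * (1+\<bar>t - Im z\<bar>) / 2 \<le> \<bar>t - Im z\<bar>" using False by (simp add: field_simps)
    then show ?thesis using D2 by linarith
  qed
  have Bpos: "0 < m * (1+\<bar>t - Im z\<bar>) / 2" using m by auto
  have "cmod (F (Complex c t) / (Complex c t - z)) = cmod (F (Complex c t)) / D"
    by (simp add: D_def norm_divide)
  also have "\<dots> \<le> K * (1+\<bar>t\<bar>) powr (-\<alpha>) / (m * (1+\<bar>t - Im z\<bar>) / 2)"
    by (intro frac_le Kb DB Bpos) (use K in auto)
  also have "\<dots> = (2*K/m) * ((1+\<bar>t\<bar>) powr (-\<alpha>) / (1+\<bar>t - Im z\<bar>))"
    using m by (simp add: field_simps)
  also have "\<dots> \<le> (2*K/m) * (2 powr \<beta> * (1+\<bar>Im z\<bar>) powr (-\<beta>) *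
       ((1+\<bar>t\<bar>) powr (-(1+\<alpha>-\<beta>)) + (1+\<bar>t - Im z\<bar>) powr (-(1+\<alpha>-\<beta>))))"
  proof (intro mult_left_mono powr_quotient_le_split ab)
    show "1 + \<bar>Im z\<bar> \<le> 2 * max (1 + \<bar>t\<bar>) (1 + \<bar>t - Im z\<bar>)"
      by (simp add: max_def) (smt (verit) abs_triangle_ineq4)
  qed (use K m in auto)
  finally show ?thesis by (simp only: m_def mult.assoc)
qed

lemma norm_cauchy_integrand_le_uniform:
  fixes F :: "complex \<Rightarrow> complex" and c K \<alpha> \<beta> d t M :: real and z :: complex
  assumes Kb: "\<And>t. cmod (F (Complex c t)) \<le> K * (1+\<bar>t\<bar>) powr (-\<alpha>)" and K: "0 \<le> K"
    and ab: "0<\<beta>" "\<beta><\<alpha>" "\<alpha>\<le>1" and d: "0 < d" "d \<le> \<bar>Re z - c\<bar>" and M: "\<bar>Im z\<bar> \<le> M"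
  shows "cmod (F (Complex c t) / (Complex c t - z)) \<le>
     (2*K/min d 1) * 2 powr \<beta> * (1 + (1+M) powr (1+\<alpha>-\<beta>)) * (1+\<bar>t\<bar>) powr (-(1+\<alpha>-\<beta>))"
proof -
  define p where "p = 1+\<alpha>-\<beta>"
  have p: "p > 0" using ab by (simp add: p_def)
  have C: "0 \<le> (2*K/min d 1) * 2 powr \<beta>" using K d by auto
  have X: "(1+\<bar>Im z\<bar>) powr (-\<beta>) \<le> 1"
    using ab by (simp add: powr_minus divide_simps) (smt (verit) ge_one_powr_ge_zero)
  have AB: "1+\<bar>t\<bar> \<le> (1+M) * (1+\<bar>t - Im z\<bar>)"
  proof -
    have "1+\<bar>t\<bar> \<le> (1+\<bar>t - Im z\<bar>) + \<bar>Im z\<bar> * 1" by linarith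
    also have "\<dots> \<le> (1+\<bar>t - Im z\<bar>) + M * (1+\<bar>t - Im z\<bar>)"
      using M by (intro add_left_mono mult_mono) auto
    finally show ?thesis by (simp add: algebra_simps)
  qed
  have "((1+M) * (1+\<bar>t - Im z\<bar>)) powr (-p) \<le> (1+\<bar>t\<bar>) powr (-p)"
    by (rule powr_mono2'[OF _ _ AB]) (use p in auto)
  then have "(1+M) powr (-p) * (1+\<bar>t - Im z\<bar>) powr (-p) \<le> (1+\<bar>t\<bar>) powr (-p)"
    using M by (subst (asm) powr_mult) auto
  then have Bb: "(1+\<bar>t - Im z\<bar>) powr (-p) \<le> (1+M) powr p * (1+\<bar>t\<bar>) powr (-p)"
    using M by (simp add: powr_minus field_simps)
  have "cmod (F (Complex c t) / (Complex c t - z)) \<le>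
     ((2*K/min d 1) * 2 powr \<beta>) * (1+\<bar>Im z\<bar>) powr (-\<beta>) *
       ((1+\<bar>t\<bar>) powr (-p) + (1+\<bar>t - Im z\<bar>) powr (-p))"
    using norm_cauchy_integrand_le[OF Kb K ab d] unfolding p_def by (simp add: mult_ac)
  also have "\<dots> \<le> ((2*K/min d 1) * 2 powr \<beta>) * 1 * ((1+\<bar>t\<bar>) powr (-p) + (1+M) powr p * (1+\<bar>t\<bar>) powr (-p))"
    by (intro mult_mono C X add_left_mono Bb) (use K d in auto)
  also have "\<dots> = (2*K/min d 1) * 2 powr \<beta> * (1 + (1+M) powr p) * (1+\<bar>t\<bar>) powr (-p)"
    by (simp add: algebra_simps add_divide_distrib)
  finally show ?thesis unfolding p_def .
qed

text \<open>Cauchy integrals along the vertical line \<open>Re w = c\<close>, with the factor \<open>\<i>\<close> of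
  \<open>dw = \<i> dt\<close> dropped; \<open>line_cauchy\<close> is a junk value unless the truncations converge.\<close>
definition line_cauchy_trunc :: "(complex \<Rightarrow> complex) \<Rightarrow> real \<Rightarrow> real \<Rightarrow> complex \<Rightarrow> complex" where
  "line_cauchy_trunc F c n z = integral {-n..n} (\<lambda>t. F (Complex c t) / (Complex c t - z))"

definition line_cauchy :: "(complex \<Rightarrow> complex) \<Rightarrow> real \<Rightarrow> complex \<Rightarrow> complex" where
  "line_cauchy F c z = lim (\<lambda>n::nat. line_cauchy_trunc F c (real n) z)"

lemma continuous_on_line_integrand:
  assumes contF: "continuous_on UNIV (\<lambda>t. F (Complex c t))" and z: "Re z \<noteq> c"
  shows "continuous_on S (\<lambda>t. F (Complex c t) / (Complex c t - z))"
proof (rule continuous_on_divide)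
  show "continuous_on S (\<lambda>t. F (Complex c t))" using contF continuous_on_subset by blast
  show "continuous_on S (\<lambda>t. Complex c t - z)" by (intro continuous_intros)
  show "\<forall>t\<in>S. Complex c t - z \<noteq> 0" using z by (auto simp: complex_eq_iff)
qed

lemma line_integrand_integrable:
  assumes contF: "continuous_on UNIV (\<lambda>t. F (Complex c t))" and z: "Re z \<noteq> c"
  shows "(\<lambda>t. F (Complex c t) / (Complex c t - z)) integrable_on {a..b}"
  by (intro integrable_continuous_interval continuous_on_line_integrand[OF contF z])

lemma norm_line_cauchy_trunc_le:
  fixes F :: "complex \<Rightarrow> complex" and c K \<alpha> \<beta> d n :: real and z :: complex
  assumes contF: "continuous_on UNIV (\<lambda>t. F (Complex c t))"
    and Kb: "\<And>t. cmod (F (Complex c t)) \<le> K * (1+\<bar>t\<bar>) powr (-\<alpha>)" and K: "0 \<le> K"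
    and ab: "0<\<beta>" "\<beta><\<alpha>" "\<alpha>\<le>1" and d: "0 < d" "d \<le> \<bar>Re z - c\<bar>"
  shows "cmod (line_cauchy_trunc F c n z) \<le>
     (2*K/min d 1) * 2 powr \<beta> * (1+\<bar>Im z\<bar>) powr (-\<beta>) * (4/(\<alpha>-\<beta>))"
proof -
  define p where "p = 1+\<alpha>-\<beta>"
  have p: "p > 1" using ab by (simp add: p_def)
  define C where "C = (2*K/min d 1) * 2 powr \<beta> * (1+\<bar>Im z\<bar>) powr (-\<beta>)"
  have C: "0 \<le> C" using K d by (auto simp: C_def)
  have z: "Re z \<noteq> c" using d by auto
  define u where "u t = (1+\<bar>t-0\<bar>) powr (-p)" for t
  define v where "v t = (1+\<bar>t-Im z\<bar>) powr (-p)" for t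
  have iu: "u integrable_on {-n..n}" unfolding u_def by (rule kernel_integrable)
  have iv: "v integrable_on {-n..n}" unfolding v_def by (rule kernel_integrable)
  have "cmod (line_cauchy_trunc F c n z) \<le> integral {-n..n} (\<lambda>t. C * (u t + v t))"
    unfolding line_cauchy_trunc_def
  proof (rule integral_norm_bound_integral)
    show "(\<lambda>t. F (Complex c t) / (Complex c t - z)) integrable_on {-n..n}"
      by (rule line_integrand_integrable[OF contF z])
    show "(\<lambda>t. C * (u t + v t)) integrable_on {-n..n}"
      by (intro integrable_on_mult_right integrable_add iu iv)
    fix t show "cmod (F (Complex c t) / (Complex c t - z)) \<le> C * (u t + v t)"
      using norm_cauchy_integrand_le[OF Kb K ab d, of t] by (simp add: C_def u_def v_def p_def)
  qed
  also have "\<dots> = C * (integral {-n..n} u + integral {-n..n} v)"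
    using iu iv by (simp add: integral_add)
  also have "\<dots> \<le> C * (2/(p-1) + 2/(p-1))"
    unfolding u_def v_def by (intro mult_left_mono add_mono kernel_integral_le p C)
  also have "\<dots> = C * (4/(\<alpha>-\<beta>))" by (simp add: p_def)
  finally show ?thesis by (simp add: C_def)
qed

lemma norm_line_cauchy_trunc_diff_le:
  fixes F :: "complex \<Rightarrow> complex" and c K \<alpha> \<beta> d n m M :: real and z :: complex
  assumes contF: "continuous_on UNIV (\<lambda>t. F (Complex c t))"
    and Kb: "\<And>t. cmod (F (Complex c t)) \<le> K * (1+\<bar>t\<bar>) powr (-\<alpha>)" and K: "0 \<le> K"
    and ab: "0<\<beta>" "\<beta><\<alpha>" "\<alpha>\<le>1" and d: "0 < d" "d \<le> \<bar>Re z - c\<bar>" and M: "\<bar>Im z\<bar> \<le> M"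
    and nm: "0 \<le> n" "n \<le> m"
  shows "cmod (line_cauchy_trunc F c m z - line_cauchy_trunc F c n z) \<le>
     2 * ((2*K/min d 1) * 2 powr \<beta> * (1 + (1+M) powr (1+\<alpha>-\<beta>))) * ((1+n) powr (-(\<alpha>-\<beta>)) / (\<alpha>-\<beta>))"
proof -
  define p where "p = 1+\<alpha>-\<beta>"
  have p: "p > 1" using ab by (simp add: p_def)
  define C where "C = (2*K/min d 1) * 2 powr \<beta> * (1 + (1+M) powr (1+\<alpha>-\<beta>))"
  have C: "0 \<le> C" using K d by (auto simp: C_def)
  have z: "Re z \<noteq> c" using d by auto
  define f where "f t = F (Complex c t) / (Complex c t - z)" for t
  have fi: "f integrable_on {a..b}" for a b unfolding f_def by (rule line_integrand_integrable[OF contF z])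
  define u where "u = (\<lambda>t::real. (1+\<bar>t\<bar>) powr (-p))"
  have iu: "u integrable_on {a..b}" for a b
    using kernel_integrable[of 0 p a b] by (simp add: u_def)
  have fb: "cmod (f t) \<le> C * u t" for t
    using norm_cauchy_integrand_le_uniform[OF Kb K ab d M, of t] by (simp add: C_def u_def p_def f_def)
  have split1: "integral {-m..m} f = integral {-m..-n} f + integral {-n..m} f"
    by (rule Henstock_Kurzweil_Integration.integral_combine[symmetric]) (use nm fi in auto)
  have split2: "integral {-n..m} f = integral {-n..n} f + integral {n..m} f"
    by (rule Henstock_Kurzweil_Integration.integral_combine[symmetric]) (use nm fi in auto)
  have diff: "line_cauchy_trunc F c m z - line_cauchy_trunc F c n z = integral {-m..-n} f + integral {n..m} f"
    unfolding line_cauchy_trunc_def f_def[symmetric] using split1 split2 by simp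
  have b1: "cmod (integral {-m..-n} f) \<le> C * ((1+n) powr (1-p)/(p-1))"
  proof -
    have "cmod (integral {-m..-n} f) \<le> integral {-m..-n} (\<lambda>t. C * u t)"
      by (intro integral_norm_bound_integral fi integrable_on_mult_right iu fb)
    also have "\<dots> = C * integral {-m..-n} u" by simp
    also have "\<dots> \<le> C * ((1+n) powr (1-p)/(p-1))"
      unfolding u_def by (intro mult_left_mono kernel_tail_integral_left_le p C) (use nm in auto)
    finally show ?thesis .
  qed
  have b2: "cmod (integral {n..m} f) \<le> C * ((1+n) powr (1-p)/(p-1))"
  proof -
    have "cmod (integral {n..m} f) \<le> integral {n..m} (\<lambda>t. C * u t)"
      by (intro integral_norm_bound_integral fi integrable_on_mult_right iu fb)
    also have "\<dots> = C * integral {n..m} u" by simp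
    also have "\<dots> \<le> C * ((1+n) powr (1-p)/(p-1))"
      unfolding u_def by (intro mult_left_mono kernel_tail_integral_right_le p C) (use nm in auto)
    finally show ?thesis .
  qed
  have "cmod (line_cauchy_trunc F c m z - line_cauchy_trunc F c n z) \<le> C * ((1+n) powr (1-p)/(p-1)) + C * ((1+n) powr (1-p)/(p-1))"
    unfolding diff by (rule order_trans[OF norm_triangle_ineq add_mono[OF b1 b2]])
  also have "\<dots> = 2 * C * ((1+n) powr (-(\<alpha>-\<beta>)) / (\<alpha>-\<beta>))"
    by (simp add: p_def)
  finally show ?thesis by (simp add: C_def)
qed

lemma line_cauchy_trunc_holomorphic_convex:
  assumes contF: "continuous_on UNIV (\<lambda>t. F (Complex c t))"
    and U: "convex U" "U \<subseteq> {z. Re z \<noteq> c}"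
  shows "line_cauchy_trunc F c n holomorphic_on U"
proof -
  have "(\<lambda>x. integral (cbox (-n) n) (\<lambda>t. F (Complex c t) / (Complex c t - x))) holomorphic_on U"
  proof (rule leibniz_rule_holomorphic[where fx = "\<lambda>x t. F (Complex c t) / (Complex c t - x)^2"])
    fix x t assume x: "x \<in> U"
    then have nz: "Complex c t - x \<noteq> 0" using U by (auto simp: complex_eq_iff)
    show "((\<lambda>x. F (Complex c t) / (Complex c t - x)) has_field_derivative F (Complex c t) / (Complex c t - x)^2) (at x within U)"
      using nz by (auto intro!: derivative_eq_intros simp: power2_eq_square field_simps)
  next
    fix x assume x: "x \<in> U"
    then have "Re x \<noteq> c" using U by auto
    then show "(\<lambda>t. F (Complex c t) / (Complex c t - x)) integrable_on cbox (-n) n"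
      using line_integrand_integrable[OF contF] by auto
  next
    have c1: "continuous_on (U \<times> cbox (-n) n) (\<lambda>p. F (Complex c (snd p)))"
      by (rule continuous_on_compose2[OF contF]) (auto intro!: continuous_intros)
    have c2: "continuous_on (U \<times> cbox (-n) n) (\<lambda>p. (Complex c (snd p) - fst p)^2)"
      by (intro continuous_intros)
    have "continuous_on (U \<times> cbox (-n) n) (\<lambda>p. F (Complex c (snd p)) / (Complex c (snd p) - fst p)^2)"
    proof (rule continuous_on_divide[OF c1 c2])
      have "Complex c t - x \<noteq> 0" if "x \<in> U" for x t using that U by (auto simp: complex_eq_iff)
      then show "\<forall>p\<in>U \<times> cbox (- n) n. (Complex c (snd p) - fst p)\<^sup>2 \<noteq> 0" by auto
    qed
    then show "continuous_on (U \<times> cbox (-n) n) (\<lambda>(x, t). F (Complex c t) / (Complex c t - x)^2)"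
      by (simp add: case_prod_beta')
  qed (use U in auto)
  then show ?thesis by (simp add: line_cauchy_trunc_def[abs_def])
qed

lemma line_cauchy_trunc_holomorphic:
  assumes contF: "continuous_on UNIV (\<lambda>t. F (Complex c t))"
  shows "line_cauchy_trunc F c n holomorphic_on {z. Re z \<noteq> c}"
proof -
  have "{z. Re z \<noteq> c} = {z. Re z < c} \<union> {z. Re z > c}" by auto
  moreover have "line_cauchy_trunc F c n holomorphic_on {z. Re z < c} \<union> {z. Re z > c}"
    by (intro holomorphic_on_Un line_cauchy_trunc_holomorphic_convex[OF contF] convex_halfspace_Re_lt convex_halfspace_Re_gt
        open_halfspace_Re_lt open_halfspace_Re_gt) auto
  ultimately show ?thesis by simp
qed

locale line_decay =
  fixes F :: "complex \<Rightarrow> complex" and c K \<alpha> \<beta> :: real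
  assumes line_continuous: "continuous_on UNIV (\<lambda>t. F (Complex c t))"
    and line_bound: "\<And>t. cmod (F (Complex c t)) \<le> K * (1+\<bar>t\<bar>) powr (-\<alpha>)"
    and K_nonneg: "0 \<le> K"
    and exponents: "0 < \<beta>" "\<beta> < \<alpha>" "\<alpha> \<le> 1"
begin

definition tail_bound :: "real \<Rightarrow> real \<Rightarrow> real \<Rightarrow> real" where
  "tail_bound d M n = 2 * ((2*K/min d 1) * 2 powr \<beta> * (1 + (1+M) powr (1+\<alpha>-\<beta>))) * ((1+n) powr (-(\<alpha>-\<beta>)) / (\<alpha>-\<beta>))"

lemma tail_bound_tendsto_0: "(\<lambda>n::nat. tail_bound d M (real n)) \<longlonglongrightarrow> 0"
proof -
  have "filterlim (\<lambda>n::nat. 1 + real n) at_top sequentially"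
    by (intro filterlim_tendsto_add_at_top[OF tendsto_const] filterlim_real_sequentially)
  then have "(\<lambda>n::nat. (1 + real n) powr (-(\<alpha>-\<beta>))) \<longlonglongrightarrow> 0"
    by (intro tendsto_neg_powr) (use exponents in auto)
  then have "(\<lambda>n::nat. 2 * ((2*K/min d 1) * 2 powr \<beta> * (1 + (1+M) powr (1+\<alpha>-\<beta>))) * ((1 + real n) powr (-(\<alpha>-\<beta>)) / (\<alpha>-\<beta>)))
     \<longlonglongrightarrow> 2 * ((2*K/min d 1) * 2 powr \<beta> * (1 + (1+M) powr (1+\<alpha>-\<beta>))) * (0 / (\<alpha>-\<beta>))"
    by (intro tendsto_intros) (use exponents in auto)
  then show ?thesis by (simp add: tail_bound_def)
qed

lemma norm_trunc_diff_le_tail_bound: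
  assumes d: "0 < d" "d \<le> \<bar>Re z - c\<bar>" and M: "\<bar>Im z\<bar> \<le> M" and nm: "n \<le> m"
  shows "cmod (line_cauchy_trunc F c (real m) z - line_cauchy_trunc F c (real n) z) \<le> tail_bound d M (real n)"
  using norm_line_cauchy_trunc_diff_le[OF line_continuous line_bound K_nonneg exponents d M, of "real n" "real m"] nm
  by (simp add: tail_bound_def)

lemma line_cauchy_trunc_tendsto:
  assumes z: "Re z \<noteq> c"
  shows "(\<lambda>n. line_cauchy_trunc F c (real n) z) \<longlonglongrightarrow> line_cauchy F c z"
proof -
  define d where "d = \<bar>Re z - c\<bar>"
  have d: "0 < d" "d \<le> \<bar>Re z - c\<bar>" using z by (auto simp: d_def)
  have M: "\<bar>Im z\<bar> \<le> \<bar>Im z\<bar>" by simp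
  have "Cauchy (\<lambda>n. line_cauchy_trunc F c (real n) z)"
  proof (rule CauchyI)
    fix e :: real assume e: "0 < e"
    from order_tendstoD(2)[OF tail_bound_tendsto_0[of d "\<bar>Im z\<bar>"] e]
    obtain N where N: "\<And>n. n \<ge> N \<Longrightarrow> tail_bound d \<bar>Im z\<bar> (real n) < e"
      unfolding eventually_sequentially by blast
    show "\<exists>N. \<forall>m\<ge>N. \<forall>n\<ge>N. cmod (line_cauchy_trunc F c (real m) z - line_cauchy_trunc F c (real n) z) < e"
    proof (intro exI allI impI)
      fix m n assume mn: "N \<le> m" "N \<le> n"
      show "cmod (line_cauchy_trunc F c (real m) z - line_cauchy_trunc F c (real n) z) < e"
      proof (cases "n \<le> m")
        case True
        then show ?thesis using norm_trunc_diff_le_tail_bound[OF d M True] N[OF mn(2)] by linarith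
      next
        case False
        then show ?thesis using norm_trunc_diff_le_tail_bound[OF d M, of m n] N[OF mn(1)]
          by (simp add: norm_minus_commute)
      qed
    qed
  qed
  then show ?thesis
    unfolding line_cauchy_def by (simp add: Cauchy_convergent_iff convergent_LIMSEQ_iff)
qed

lemma norm_line_cauchy_minus_trunc_le:
  assumes d: "0 < d" "d \<le> \<bar>Re z - c\<bar>" and M: "\<bar>Im z\<bar> \<le> M"
  shows "cmod (line_cauchy F c z - line_cauchy_trunc F c (real n) z) \<le> tail_bound d M (real n)"
proof (rule LIMSEQ_le_const2)
  have z: "Re z \<noteq> c" using d by auto
  show "(\<lambda>m. cmod (line_cauchy_trunc F c (real m) z - line_cauchy_trunc F c (real n) z)) \<longlonglongrightarrow> cmod (line_cauchy F c z - line_cauchy_trunc F c (real n) z)"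
    by (intro tendsto_intros line_cauchy_trunc_tendsto z)
  show "\<exists>N. \<forall>m\<ge>N. cmod (line_cauchy_trunc F c (real m) z - line_cauchy_trunc F c (real n) z) \<le> tail_bound d M (real n)"
    using norm_trunc_diff_le_tail_bound[OF d M] by blast
qed

lemma norm_line_cauchy_le:
  assumes d: "0 < d" "d \<le> \<bar>Re z - c\<bar>"
  shows "cmod (line_cauchy F c z) \<le> ((2*K/min d 1) * 2 powr \<beta> * (4/(\<alpha>-\<beta>))) * (1+\<bar>Im z\<bar>) powr (-\<beta>)"
proof (rule LIMSEQ_le_const2)
  have z: "Re z \<noteq> c" using d by auto
  show "(\<lambda>m. cmod (line_cauchy_trunc F c (real m) z)) \<longlonglongrightarrow> cmod (line_cauchy F c z)"
    by (intro tendsto_intros line_cauchy_trunc_tendsto z)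
  show "\<exists>N. \<forall>m\<ge>N. cmod (line_cauchy_trunc F c (real m) z) \<le> ((2*K/min d 1) * 2 powr \<beta> * (4/(\<alpha>-\<beta>))) * (1+\<bar>Im z\<bar>) powr (-\<beta>)"
    using norm_line_cauchy_trunc_le[OF line_continuous line_bound K_nonneg exponents d] by (auto simp: mult_ac)
qed

lemma line_cauchy_decay:
  assumes "0 < d"
  obtains B where "0 \<le> B" "\<And>z. d \<le> \<bar>Re z - c\<bar> \<Longrightarrow> cmod (line_cauchy F c z) \<le> B * (1+\<bar>Im z\<bar>) powr (-\<beta>)"
proof
  show "0 \<le> (2*K/min d 1) * 2 powr \<beta> * (4/(\<alpha>-\<beta>))" using assms K_nonneg exponents by simp
qed (use norm_line_cauchy_le assms in blast)

lemma line_cauchy_trunc_uniform_limit: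
  assumes x: "Re x \<noteq> c"
  defines "r \<equiv> \<bar>Re x - c\<bar> / 2"
  shows "uniform_limit (cball x r) (\<lambda>n. line_cauchy_trunc F c (real n)) (line_cauchy F c) sequentially"
proof (rule uniform_limitI)
  have r: "0 < r" using x by (auto simp: r_def)
  have rz: "r \<le> \<bar>Re z - c\<bar>" "\<bar>Im z\<bar> \<le> \<bar>Im x\<bar> + r" if "z \<in> cball x r" for z
  proof -
    have h: "\<bar>Re x - Re z\<bar> \<le> r" "\<bar>Im x - Im z\<bar> \<le> r"
      using that abs_Re_le_cmod[of "x - z"] abs_Im_le_cmod[of "x - z"] by (auto simp: dist_norm)
    moreover have "\<bar>Re x - c\<bar> \<le> \<bar>Re x - Re z\<bar> + \<bar>Re z - c\<bar>"
      using abs_triangle_ineq[of "Re x - Re z" "Re z - c"] by simp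
    ultimately show "r \<le> \<bar>Re z - c\<bar>" unfolding r_def by (smt (verit) field_sum_of_halves)
    show "\<bar>Im z\<bar> \<le> \<bar>Im x\<bar> + r" using h(2) by linarith
  qed
  fix e :: real assume e: "0 < e"
  from order_tendstoD(2)[OF tail_bound_tendsto_0[of r "\<bar>Im x\<bar> + r"] e]
  show "\<forall>\<^sub>F n in sequentially. \<forall>z\<in>cball x r. dist (line_cauchy_trunc F c (real n) z) (line_cauchy F c z) < e"
  proof eventually_elim
    case (elim n)
    show ?case
    proof
      fix z assume z: "z \<in> cball x r"
      have "dist (line_cauchy_trunc F c (real n) z) (line_cauchy F c z)
            = cmod (line_cauchy F c z - line_cauchy_trunc F c (real n) z)"
        by (simp add: dist_norm norm_minus_commute)
      also have "\<dots> \<le> tail_bound r (\<bar>Im x\<bar> + r) (real n)"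
        by (rule norm_line_cauchy_minus_trunc_le[OF r rz[OF z]])
      finally show "dist (line_cauchy_trunc F c (real n) z) (line_cauchy F c z) < e" using elim by linarith
    qed
  qed
qed

lemma line_cauchy_holomorphic: "line_cauchy F c holomorphic_on {z. Re z \<noteq> c}"
proof (rule holomorphic_uniform_sequence[where f = "\<lambda>n. line_cauchy_trunc F c (real n)"])
  have "{z. Re z \<noteq> c} = {z. Re z < c} \<union> {z. Re z > c}" by auto
  then show "open {z. Re z \<noteq> c}" by (simp add: open_Un open_halfspace_Re_lt open_halfspace_Re_gt)
  show "line_cauchy_trunc F c (real n) holomorphic_on {z. Re z \<noteq> c}" for n
    by (rule line_cauchy_trunc_holomorphic[OF line_continuous])
  fix x assume x: "x \<in> {z. Re z \<noteq> c}"
  define r where "r = \<bar>Re x - c\<bar> / 2"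
  have "cball x r \<subseteq> {z. Re z \<noteq> c}"
  proof
    fix z assume "z \<in> cball x r"
    then have "\<bar>Re x - Re z\<bar> \<le> r" using abs_Re_le_cmod[of "x - z"] by (auto simp: dist_norm)
    then show "z \<in> {z. Re z \<noteq> c}" using x by (auto simp: r_def)
  qed
  moreover have "0 < r" using x by (auto simp: r_def)
  moreover have "uniform_limit (cball x r) (\<lambda>n. line_cauchy_trunc F c (real n)) (line_cauchy F c) sequentially"
    unfolding r_def by (rule line_cauchy_trunc_uniform_limit) (use x in simp)
  ultimately show "\<exists>d>0. cball x d \<subseteq> {z. Re z \<noteq> c} \<and>
      uniform_limit (cball x d) (\<lambda>n. line_cauchy_trunc F c (real n)) (line_cauchy F c) sequentially"
    by blast
qed

end

lemma norm_horizontal_cauchy_integral_le: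
  fixes f :: "complex \<Rightarrow> complex"
  assumes cont: "continuous_on {w. \<bar>Re w\<bar> \<le> c \<and> Im w = s} f"
    and Im: "Im u = s" "Im v = s" and Re: "\<bar>Re u\<bar> \<le> c" "\<bar>Re v\<bar> \<le> c"
    and bnd: "\<And>w. \<bar>Re w\<bar> \<le> c \<Longrightarrow> Im w = s \<Longrightarrow> cmod (f w) \<le> B" and B: "0 \<le> B"
    and sz: "\<bar>Im z\<bar> < \<bar>s\<bar>"
  shows "cmod (contour_integral (linepath u v) (\<lambda>w. f w / (w - z))) \<le> B / (\<bar>s\<bar> - \<bar>Im z\<bar>) * (2*c)"
proof -
  have on_line: "Im w = s \<and> \<bar>Re w\<bar> \<le> c" if "w \<in> closed_segment u v" for w
    using that Im Re by (auto simp: closed_segment_same_Im closed_segment_eq_real_ivl split: if_splits)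
  have "continuous_on (closed_segment u v) (\<lambda>w. f w / (w - z))"
  proof (intro continuous_intros continuous_on_subset[OF cont])
    show "closed_segment u v \<subseteq> {w. \<bar>Re w\<bar> \<le> c \<and> Im w = s}" using on_line by auto
    show "\<forall>w\<in>closed_segment u v. w - z \<noteq> 0" using on_line sz by force
  qed
  then have hi: "((\<lambda>w. f w / (w - z)) has_contour_integral contour_integral (linepath u v) (\<lambda>w. f w / (w - z))) (linepath u v)"
    by (intro has_contour_integral_integral contour_integrable_continuous_linepath)
  have "cmod (contour_integral (linepath u v) (\<lambda>w. f w / (w - z))) \<le> B / (\<bar>s\<bar> - \<bar>Im z\<bar>) * cmod (v - u)"
  proof (rule has_contour_integral_bound_linepath[OF hi])
    show "0 \<le> B / (\<bar>s\<bar> - \<bar>Im z\<bar>)" using B sz by auto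
    fix w assume w: "w \<in> closed_segment u v"
    then have wI: "Im w = s" and wR: "\<bar>Re w\<bar> \<le> c" using on_line by auto
    have "\<bar>s\<bar> - \<bar>Im z\<bar> \<le> \<bar>Im (w - z)\<bar>" using wI by auto
    also have "\<dots> \<le> cmod (w - z)" by (rule abs_Im_le_cmod)
    finally have d: "\<bar>s\<bar> - \<bar>Im z\<bar> \<le> cmod (w - z)" .
    have "cmod (f w / (w - z)) = cmod (f w) / cmod (w - z)" by (simp add: norm_divide)
    also have "\<dots> \<le> B / (\<bar>s\<bar> - \<bar>Im z\<bar>)"
      by (rule frac_le) (use B bnd[OF wR wI] d sz in auto)
    finally show "cmod (f w / (w - z)) \<le> B / (\<bar>s\<bar> - \<bar>Im z\<bar>)" .
  qed
  also have "cmod (v - u) \<le> 2*c"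
  proof -
    have "v - u = of_real (Re v - Re u)" using Im by (auto simp: complex_eq_iff)
    then have "cmod (v - u) = \<bar>Re v - Re u\<bar>" by (metis norm_of_real)
    then show ?thesis using Re by linarith
  qed
  then have "B / (\<bar>s\<bar> - \<bar>Im z\<bar>) * cmod (v - u) \<le> B / (\<bar>s\<bar> - \<bar>Im z\<bar>) * (2*c)"
    using B sz by (intro mult_left_mono) auto
  finally show ?thesis .
qed

lemma rectangle_cauchy_formula:
  fixes f :: "complex \<Rightarrow> complex" and a c n :: real
  assumes hol: "f holomorphic_on strip a" and c: "0 < c" "c < a"
    and z: "\<bar>Re z\<bar> < c" and n: "\<bar>Im z\<bar> < n"
  shows "contour_integral (linepath (Complex (-c) (-n)) (Complex c (-n))) (\<lambda>w. f w / (w - z))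
       + \<i> * line_cauchy_trunc f c n z
       + contour_integral (linepath (Complex c n) (Complex (-c) n)) (\<lambda>w. f w / (w - z))
       - \<i> * line_cauchy_trunc f (-c) n z = 2 * pi * \<i> * f z"
proof -
  define S where "S = strip a"
  have convS: "convex S" and openS: "open S" by (simp_all add: S_def convex_strip open_strip)
  have contf: "continuous_on S f" using hol holomorphic_on_imp_continuous_on S_def by blast
  define h where "h = (\<lambda>w. f w / (w - z))"
  define a1 where "a1 = Complex (-c) (-n)"
  define a2 where "a2 = Complex c (-n)"
  define a3 where "a3 = Complex c n"
  define a4 where "a4 = Complex (-c) n"
  have zbox: "z \<in> box a1 a3" using z n by (auto simp: a1_def a3_def in_box_complex_iff)
  have cbS: "cbox a1 a3 \<subseteq> S" using c by (auto simp: a1_def a3_def in_cbox_complex_iff S_def strip_def)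
  have le: "Re a1 \<le> Re a3" "Im a1 \<le> Im a3" using c n by (auto simp: a1_def a3_def)
  have pim: "path_image (rectpath a1 a3) \<subseteq> S - {z}"
    using path_image_rectpath_cbox_minus_box[OF le] cbS zbox by auto
  have "(h has_contour_integral (2*pi*\<i> * winding_number (rectpath a1 a3) z * f z)) (rectpath a1 a3)"
    unfolding h_def
    by (rule Cauchy_integral_formula_convex_simple[OF convS hol[folded S_def]])
       (use z c pim interior_open[OF openS] in \<open>auto simp: S_def strip_def\<close>)
  then have cauchy: "(h has_contour_integral (2*pi*\<i> * f z)) (rectpath a1 a3)"
    using winding_number_rectpath[OF zbox] by simp
  have segs: "closed_segment a1 a2 \<subseteq> S - {z}" "closed_segment a2 a3 \<subseteq> S - {z}"
    "closed_segment a3 a4 \<subseteq> S - {z}" "closed_segment a4 a1 \<subseteq> S - {z}"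
    using pim unfolding rectpath_def Let_def
    by (auto simp: path_image_join a1_def a2_def a3_def a4_def)
  have conth: "continuous_on (S - {z}) h" unfolding h_def
    by (intro continuous_intros continuous_on_subset[OF contf]) auto
  have cseg: "continuous_on (closed_segment u v) h" if "closed_segment u v \<subseteq> S - {z}" for u v
    using continuous_on_subset[OF conth that] .
  have hi: "(h has_contour_integral contour_integral (linepath u v) h) (linepath u v)"
    if "closed_segment u v \<subseteq> S - {z}" for u v
    by (intro has_contour_integral_integral contour_integrable_continuous_linepath cseg that)
  have rp: "rectpath a1 a3 = linepath a1 a2 +++ linepath a2 a3 +++ linepath a3 a4 +++ linepath a4 a1"
    by (simp add: rectpath_def Let_def a1_def a2_def a3_def a4_def)
  have "(h has_contour_integral (contour_integral (linepath a1 a2) h + (contour_integral (linepath a2 a3) h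
          + (contour_integral (linepath a3 a4) h + contour_integral (linepath a4 a1) h)))) (rectpath a1 a3)"
    unfolding rp
    by (intro has_contour_integral_join hi[OF segs(1)] hi[OF segs(2)] hi[OF segs(3)] hi[OF segs(4)]
         valid_path_join valid_path_linepath) auto
  then have sum: "contour_integral (linepath a1 a2) h + contour_integral (linepath a2 a3) h
      + contour_integral (linepath a3 a4) h + contour_integral (linepath a4 a1) h = 2*pi*\<i> * f z"
    using has_contour_integral_unique[OF _ cauchy] by (simp add: add.assoc)
  have nn: "- n < n" using n by linarith
  have right: "contour_integral (linepath a2 a3) h = \<i> * line_cauchy_trunc f c n z"
    unfolding line_cauchy_trunc_def h_def
    by (rule contour_integral_linepath_same_Re) (use nn in \<open>auto simp: a2_def a3_def\<close>)
  have "contour_integral (linepath a1 a4) h = \<i> * line_cauchy_trunc f (-c) n z"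
    unfolding line_cauchy_trunc_def h_def
    by (rule contour_integral_linepath_same_Re) (use nn in \<open>auto simp: a1_def a4_def\<close>)
  then have left: "contour_integral (linepath a4 a1) h = - (\<i> * line_cauchy_trunc f (-c) n z)"
    using contour_integral_reverse_linepath[OF cseg[OF segs(4)]] by simp
  show ?thesis using sum unfolding right left by (simp add: h_def a1_def a2_def a3_def a4_def)
qed

lemma rectangle_cauchy_estimate:
  fixes f :: "complex \<Rightarrow> complex" and a c n B :: real
  assumes hol: "f holomorphic_on strip a" and c: "0 < c" "c < a"
    and bnd: "\<And>w. \<bar>Re w\<bar> \<le> c \<Longrightarrow> \<bar>Im w\<bar> = n \<Longrightarrow> cmod (f w) \<le> B" and B: "0 \<le> B"
    and z: "\<bar>Re z\<bar> < c" and n: "\<bar>Im z\<bar> < n"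
  shows "cmod ((line_cauchy_trunc f c n z - line_cauchy_trunc f (-c) n z) - 2 * pi * f z)
           \<le> 4 * c * B / (n - \<bar>Im z\<bar>)"
proof -
  define I1 where "I1 = contour_integral (linepath (Complex (-c) (-n)) (Complex c (-n))) (\<lambda>w. f w / (w - z))"
  define I3 where "I3 = contour_integral (linepath (Complex c n) (Complex (-c) n)) (\<lambda>w. f w / (w - z))"
  have cont: "continuous_on {w. \<bar>Re w\<bar> \<le> c \<and> Im w = s} f" for s
    by (rule continuous_on_subset[OF holomorphic_on_imp_continuous_on[OF hol]])
       (use c in \<open>auto simp: strip_def\<close>)
  have b1: "cmod I1 \<le> B / (n - \<bar>Im z\<bar>) * (2*c)"
    using norm_horizontal_cauchy_integral_le[OF cont, of "Complex (-c) (-n)" "-n" "Complex c (-n)" B z] bnd B n c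
    unfolding I1_def by auto
  have b3: "cmod I3 \<le> B / (n - \<bar>Im z\<bar>) * (2*c)"
    using norm_horizontal_cauchy_integral_le[OF cont, of "Complex c n" n "Complex (-c) n" B z] bnd B n c
    unfolding I3_def by auto
  have "\<i> * (I1 + \<i> * line_cauchy_trunc f c n z + I3 - \<i> * line_cauchy_trunc f (-c) n z)
        = \<i> * (2 * pi * \<i> * f z)"
    using rectangle_cauchy_formula[OF hol c z n] by (simp add: I1_def I3_def)
  then have "(line_cauchy_trunc f c n z - line_cauchy_trunc f (-c) n z) - 2 * pi * f z = \<i> * (I1 + I3)"
    by (simp add: algebra_simps)
  then have "cmod ((line_cauchy_trunc f c n z - line_cauchy_trunc f (-c) n z) - 2 * pi * f z) = cmod (I1 + I3)"
    by (simp add: norm_mult)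
  also have "\<dots> \<le> cmod I1 + cmod I3" by (rule norm_triangle_ineq)
  also have "\<dots> \<le> B / (n - \<bar>Im z\<bar>) * (2*c) + B / (n - \<bar>Im z\<bar>) * (2*c)"
    using b1 b3 by linarith
  also have "\<dots> = 4 * c * B / (n - \<bar>Im z\<bar>)" by (simp add: field_simps)
  finally show ?thesis .
qed

lemma line_cauchy_trunc_diff_tendsto:
  fixes f :: "complex \<Rightarrow> complex" and a c R B :: real
  assumes hol: "f holomorphic_on strip a" and c: "0 < c" "c < a"
    and bnd: "\<And>w. \<bar>Re w\<bar> \<le> c \<Longrightarrow> R \<le> \<bar>Im w\<bar> \<Longrightarrow> cmod (f w) \<le> B" and B: "0 \<le> B"
    and z: "\<bar>Re z\<bar> < c"
  shows "(\<lambda>n. line_cauchy_trunc f c (real n) z - line_cauchy_trunc f (-c) (real n) z) \<longlonglongrightarrow> 2 * pi * f z"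
proof -
  define E where "E n = 4 * c * B / (real n - \<bar>Im z\<bar>)" for n :: nat
  have E0: "E \<longlonglongrightarrow> 0"
  proof -
    have "filterlim (\<lambda>n::nat. - \<bar>Im z\<bar> + real n) at_top sequentially"
      by (rule filterlim_tendsto_add_at_top[OF tendsto_const filterlim_real_sequentially])
    then have "filterlim (\<lambda>n::nat. real n - \<bar>Im z\<bar>) at_infinity sequentially"
      by (intro filterlim_at_top_imp_at_infinity) (simp only: add.commute diff_conv_add_uminus)
    then have "(\<lambda>n. 4 * c * B / (real n - \<bar>Im z\<bar>)) \<longlonglongrightarrow> 0"
      by (intro tendsto_divide_0[OF tendsto_const])
    then show ?thesis by (simp add: E_def[abs_def])
  qed
  have ev: "eventually (\<lambda>n. cmod ((line_cauchy_trunc f c (real n) z - line_cauchy_trunc f (-c) (real n) z) - 2 * pi * f z) \<le> E n) sequentially"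
  proof -
    obtain N :: nat where N: "real N > \<bar>Im z\<bar> + \<bar>R\<bar>" using reals_Archimedean2 by blast
    have "cmod ((line_cauchy_trunc f c (real n) z - line_cauchy_trunc f (-c) (real n) z) - 2 * pi * f z) \<le> E n"
      if "N \<le> n" for n
      unfolding E_def by (rule rectangle_cauchy_estimate[OF hol c _ B z]) (use N that bnd in auto)
    then show ?thesis unfolding eventually_sequentially by blast
  qed
  have "(\<lambda>n. (line_cauchy_trunc f c (real n) z - line_cauchy_trunc f (-c) (real n) z) - 2 * pi * f z) \<longlonglongrightarrow> 0"
    by (rule Lim_null_comparison[OF ev E0])
  then show ?thesis by (rule LIM_zero_cancel)
qed

lemma line_decay_uniform:
  fixes F :: "complex \<Rightarrow> complex" and c R D \<alpha> :: real
  assumes cont: "continuous_on UNIV (\<lambda>t. F (Complex c t))"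
    and far: "\<And>t. R \<le> \<bar>t\<bar> \<Longrightarrow> cmod (F (Complex c t)) \<le> D * \<bar>t\<bar> powr (-\<alpha>)"
    and R: "1 \<le> R" and D: "0 \<le> D" and a: "0 < \<alpha>" "\<alpha> \<le> 1"
  shows "\<exists>K\<ge>0. \<forall>t. cmod (F (Complex c t)) \<le> K * (1+\<bar>t\<bar>) powr (-\<alpha>)"
proof -
  have "compact ((\<lambda>t. F (Complex c t)) ` {-R..R})"
    by (intro compact_continuous_image continuous_on_subset[OF cont]) auto
  then obtain M where M: "M > 0" "\<And>t. t \<in> {-R..R} \<Longrightarrow> cmod (F (Complex c t)) \<le> M"
    using compact_imp_bounded bounded_pos by (metis image_eqI)
  define K where "K = M * (1+R) powr \<alpha> + D * 2 powr \<alpha>"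
  have K0: "K \<ge> 0" using M D by (auto simp: K_def)
  have "cmod (F (Complex c t)) \<le> K * (1+\<bar>t\<bar>) powr (-\<alpha>)" for t
  proof (cases "\<bar>t\<bar> \<le> R")
    case True
    have pos: "0 < (1+\<bar>t\<bar>) powr (-\<alpha>)" by simp
    have "1 \<le> (1+R) powr \<alpha> * (1+\<bar>t\<bar>) powr (-\<alpha>)"
    proof -
      have "(1+\<bar>t\<bar>) powr \<alpha> \<le> (1+R) powr \<alpha>" using True a by (intro powr_mono2) auto
      then show ?thesis by (simp add: powr_minus divide_simps)
    qed
    then have "M \<le> M * ((1+R) powr \<alpha> * (1+\<bar>t\<bar>) powr (-\<alpha>))" using M by simp
    also have "\<dots> \<le> K * (1+\<bar>t\<bar>) powr (-\<alpha>)"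
      using D pos by (simp add: K_def algebra_simps)
    moreover have "cmod (F (Complex c t)) \<le> M" using M(2)[of t] True by (simp add: abs_le_iff)
    ultimately show ?thesis by linarith
  next
    case False
    then have t1: "1 \<le> \<bar>t\<bar>" using R by auto
    have "\<bar>t\<bar> powr (-\<alpha>) \<le> ((1+\<bar>t\<bar>)/2) powr (-\<alpha>)"
      by (rule powr_mono2') (use t1 a in auto)
    also have "\<dots> = 2 powr \<alpha> * (1+\<bar>t\<bar>) powr (-\<alpha>)"
      by (simp add: powr_divide powr_minus divide_simps)
    finally have "D * \<bar>t\<bar> powr (-\<alpha>) \<le> D * (2 powr \<alpha> * (1+\<bar>t\<bar>) powr (-\<alpha>))"
      using D by (intro mult_left_mono) auto
    also have "\<dots> \<le> K * (1+\<bar>t\<bar>) powr (-\<alpha>)"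
      using M by (simp add: K_def algebra_simps)
    finally show ?thesis using far[of t] False by auto
  qed
  then show ?thesis using K0 by blast
qed

lemma line_decay_on_strip:
  fixes f :: "complex \<Rightarrow> complex" and a c R D \<alpha> \<beta> :: real
  assumes hol: "f holomorphic_on strip a" and c: "\<bar>c\<bar> < a"
    and far: "\<And>z. z \<in> strip a \<Longrightarrow> R \<le> \<bar>Im z\<bar> \<Longrightarrow> cmod (f z) \<le> D * \<bar>Im z\<bar> powr (-\<alpha>)"
    and R: "1 \<le> R" and D: "0 \<le> D" and exps: "0 < \<beta>" "\<beta> < \<alpha>" "\<alpha> \<le> 1"
  obtains K where "line_decay f c K \<alpha> \<beta>"
proof -
  have contf: "continuous_on (strip a) f" using hol holomorphic_on_imp_continuous_on by blast
  have line: "continuous_on UNIV (\<lambda>t. f (Complex c t))"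
    by (rule continuous_on_compose2[OF contf]) (use c in \<open>auto intro!: continuous_intros simp: strip_def\<close>)
  have "cmod (f (Complex c t)) \<le> D * \<bar>t\<bar> powr (-\<alpha>)" if "R \<le> \<bar>t\<bar>" for t
    using far[of "Complex c t"] that c by (simp add: strip_def)
  from line_decay_uniform[OF line this R D _ exps(3)] exps
  obtain K where "K \<ge> 0" "\<And>t. cmod (f (Complex c t)) \<le> K * (1+\<bar>t\<bar>) powr (-\<alpha>)" by auto
  then show ?thesis by (intro that[of K]) (unfold_locales, use line exps in auto)
qed

lemma additive_decomposition:
  fixes f :: "complex \<Rightarrow> complex" and a c R D \<alpha> \<beta> :: real
  assumes hol: "f holomorphic_on strip a" and c: "0 < c" "c < a"
    and far: "\<And>z. z \<in> strip a \<Longrightarrow> R \<le> \<bar>Im z\<bar> \<Longrightarrow> cmod (f z) \<le> D * \<bar>Im z\<bar> powr (-\<alpha>)"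
    and R: "1 \<le> R" and D: "0 \<le> D" and exps: "0 < \<beta>" "\<beta> < \<alpha>" "\<alpha> \<le> 1"
  obtains g h where "\<And>z. z \<in> strip c \<Longrightarrow> f z = g z + h z"
    and "g holomorphic_on {z. Re z < c/2}" and "h holomorphic_on {z. Re z > -c/2}"
    and "\<exists>B\<ge>0. \<forall>z. Re z < c/2 \<longrightarrow> cmod (g z) \<le> B * (1+\<bar>Im z\<bar>) powr (-\<beta>)"
    and "\<exists>B\<ge>0. \<forall>z. Re z > -c/2 \<longrightarrow> cmod (h z) \<le> B * (1+\<bar>Im z\<bar>) powr (-\<beta>)"
proof -
  obtain K1 where right: "line_decay f c K1 \<alpha> \<beta>"
    using line_decay_on_strip[OF hol _ far R D exps, of c] c by auto
  obtain K2 where left: "line_decay f (-c) K2 \<alpha> \<beta>"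
    using line_decay_on_strip[OF hol _ far R D exps, of "-c"] c by auto
  obtain B1 where B1: "0 \<le> B1"
    "\<And>z. c/2 \<le> \<bar>Re z - c\<bar> \<Longrightarrow> cmod (line_cauchy f c z) \<le> B1 * (1+\<bar>Im z\<bar>) powr (-\<beta>)"
    using line_decay.line_cauchy_decay[OF right, of "c/2"] c by auto
  obtain B2 where B2: "0 \<le> B2"
    "\<And>z. c/2 \<le> \<bar>Re z - -c\<bar> \<Longrightarrow> cmod (line_cauchy f (-c) z) \<le> B2 * (1+\<bar>Im z\<bar>) powr (-\<beta>)"
    using line_decay.line_cauchy_decay[OF left, of "c/2"] c by auto
  have shrink: "cmod (w / (2 * pi)) \<le> cmod w" for w :: complex
    using pi_gt3 by (simp add: norm_divide divide_le_eq mult_le_cancel_left1)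
  define g where "g z = line_cauchy f c z / (2 * pi)" for z
  define h where "h z = - line_cauchy f (-c) z / (2 * pi)" for z
  show ?thesis
  proof
    fix z assume "z \<in> strip c"
    then have z: "\<bar>Re z\<bar> < c" by (simp add: strip_def)
    have bnd: "cmod (f w) \<le> D" if "\<bar>Re w\<bar> \<le> c" "R \<le> \<bar>Im w\<bar>" for w
    proof -
      have "cmod (f w) \<le> D * \<bar>Im w\<bar> powr (-\<alpha>)" using far[OF _ that(2)] that(1) c by (simp add: strip_def)
      also have "\<dots> \<le> D" using powr_neg_le_one[of "\<bar>Im w\<bar>" \<alpha>] R that(2) exps D
        by (simp add: mult_left_le)
      finally show ?thesis .
    qed
    have "(\<lambda>n. line_cauchy_trunc f c (real n) z - line_cauchy_trunc f (-c) (real n) z)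
            \<longlonglongrightarrow> line_cauchy f c z - line_cauchy f (-c) z"
      using z by (intro tendsto_diff line_decay.line_cauchy_trunc_tendsto[OF right]
          line_decay.line_cauchy_trunc_tendsto[OF left]) auto
    from LIMSEQ_unique[OF this line_cauchy_trunc_diff_tendsto[OF hol c bnd D z]]
    show "f z = g z + h z" by (simp add: g_def h_def field_simps)
  next
    show "g holomorphic_on {z. Re z < c/2}" unfolding g_def[abs_def] using c
      by (intro holomorphic_intros holomorphic_on_subset[OF line_decay.line_cauchy_holomorphic[OF right]]) auto
    show "h holomorphic_on {z. Re z > -c/2}" unfolding h_def[abs_def] using c
      by (intro holomorphic_intros holomorphic_on_subset[OF line_decay.line_cauchy_holomorphic[OF left]]) auto
    have "cmod (g z) \<le> B1 * (1+\<bar>Im z\<bar>) powr (-\<beta>)" if "Re z < c/2" for z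
    proof -
      have "c/2 \<le> \<bar>Re z - c\<bar>" using that by (simp add: abs_if)
      from order_trans[OF shrink B1(2)[OF this]] show ?thesis unfolding g_def .
    qed
    with B1(1) show "\<exists>B\<ge>0. \<forall>z. Re z < c/2 \<longrightarrow> cmod (g z) \<le> B * (1+\<bar>Im z\<bar>) powr (-\<beta>)" by blast
    have "cmod (h z) \<le> B2 * (1+\<bar>Im z\<bar>) powr (-\<beta>)" if "Re z > -c/2" for z
    proof -
      have "c/2 \<le> \<bar>Re z - -c\<bar>" using that by (simp add: abs_if)
      from order_trans[OF shrink B2(2)[OF this]] show ?thesis by (simp add: h_def)
    qed
    with B2(1) show "\<exists>B\<ge>0. \<forall>z. Re z > -c/2 \<longrightarrow> cmod (h z) \<le> B * (1+\<bar>Im z\<bar>) powr (-\<beta>)" by blast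
  qed
qed

lemma norm_exp_minus_one_le:
  fixes w :: complex and B :: real
  assumes "cmod w \<le> B"
  shows "cmod (exp w - 1) \<le> (3/2 + 2 * (exp B + 1)) * cmod w"
proof (cases "cmod w \<le> 1/2")
  case True
  then have "cmod (exp w - 1) \<le> 3/2 * cmod w" by (rule norm_exp_bounds(2))
  also have "\<dots> \<le> (3/2 + 2 * (exp B + 1)) * cmod w"
    by (intro mult_right_mono) (auto simp: add_nonneg_nonneg)
  finally show ?thesis .
next
  case False
  have "cmod (exp w - 1) \<le> cmod (exp w) + 1" by (metis norm_one norm_triangle_ineq4)
  also have "\<dots> \<le> exp (cmod w) + 1" using norm_exp[of w] by simp
  also have "\<dots> \<le> exp B + 1" using assms by simp
  also have "\<dots> \<le> 2 * (exp B + 1) * cmod w"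
  proof -
    have "(exp B + 1) * 1 \<le> (exp B + 1) * (2 * cmod w)" using False
      by (intro mult_left_mono) (auto simp: add_nonneg_nonneg)
    then show ?thesis by (simp add: mult_ac)
  qed
  also have "\<dots> \<le> (3/2 + 2 * (exp B + 1)) * cmod w" by (intro mult_right_mono) auto
  finally show ?thesis .
qed

lemma norm_exp_minus_one_decay:
  fixes w :: complex and B \<beta> \<eta> \<xi> :: real
  assumes w: "cmod w \<le> B * (1+\<bar>\<xi>\<bar>) powr (-\<beta>)" and B: "0 \<le> B" and b: "0 < \<beta>"
    and eta: "\<bar>\<eta>\<bar> < 1" and xi: "1 \<le> \<bar>\<xi>\<bar>"
  shows "cmod (exp w - 1) \<le> ((3/2 + 2*(exp B + 1)) * B) / cmod (Complex \<eta> \<xi>) powr \<beta>"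
proof -
  define z where "z = Complex \<eta> \<xi>"
  have z1: "1 \<le> cmod z" using abs_Im_le_cmod[of z] xi by (simp add: z_def)
  have z2: "cmod z \<le> 1 + \<bar>\<xi>\<bar>" using cmod_le[of z] eta by (simp add: z_def)
  have p1: "(1+\<bar>\<xi>\<bar>) powr (-\<beta>) \<le> 1"
  proof -
    have "1 \<le> (1+\<bar>\<xi>\<bar>) powr \<beta>" using b by (intro ge_one_powr_ge_zero) auto
    then show ?thesis by (simp add: powr_minus divide_simps)
  qed
  have p2: "(1+\<bar>\<xi>\<bar>) powr (-\<beta>) \<le> cmod z powr (-\<beta>)"
    by (rule powr_mono2') (use b z1 z2 in auto)
  have "B * (1+\<bar>\<xi>\<bar>) powr (-\<beta>) \<le> B * 1" using p1 B by (intro mult_left_mono) auto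
  then have wB: "cmod w \<le> B" using w by linarith
  define Ce where "Ce = 3/2 + 2*(exp B + 1)"
  have Ce: "0 \<le> Ce" by (simp add: Ce_def add_nonneg_nonneg)
  have "cmod (exp w - 1) \<le> Ce * cmod w" unfolding Ce_def by (rule norm_exp_minus_one_le[OF wB])
  also have "\<dots> \<le> Ce * (B * (1+\<bar>\<xi>\<bar>) powr (-\<beta>))" by (intro mult_left_mono w Ce)
  also have "\<dots> \<le> Ce * (B * cmod z powr (-\<beta>))" by (intro mult_left_mono p2 Ce B)
  also have "\<dots> = (Ce * B) / cmod z powr \<beta>" by (simp add: powr_minus divide_simps)
  finally show ?thesis by (simp add: Ce_def z_def)
qed

lemma exp_factor_bounds:
  fixes g :: "complex \<Rightarrow> complex" and U :: "complex set" and B \<beta> r :: real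
  assumes B: "0 \<le> B" and \<beta>: "0 < \<beta>" and r: "r \<le> 1"
    and bound: "\<And>z. z \<in> U \<Longrightarrow> cmod (g z) \<le> B * (1+\<bar>Im z\<bar>) powr (-\<beta>)"
  shows "bounded ((\<lambda>z. exp (g z)) ` U)"
    and "\<exists>C R. \<forall>\<eta> \<xi>. \<bar>\<eta>\<bar> < r \<and> Complex \<eta> \<xi> \<in> U \<and> \<bar>\<xi>\<bar> \<ge> R \<longrightarrow>
           cmod (exp (g (Complex \<eta> \<xi>)) - 1) \<le> C / cmod (Complex \<eta> \<xi>) powr \<beta>"
proof -
  show "bounded ((\<lambda>z. exp (g z)) ` U)"
  proof (rule boundedI)
    fix x assume "x \<in> (\<lambda>z. exp (g z)) ` U"
    then obtain z where z: "z \<in> U" "x = exp (g z)" by auto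
    have "B * (1+\<bar>Im z\<bar>) powr (-\<beta>) \<le> B"
      using powr_neg_le_one[of "1+\<bar>Im z\<bar>" \<beta>] \<beta> B by (simp add: mult_left_le)
    then have "cmod (g z) \<le> B" using bound[OF z(1)] by linarith
    then show "cmod x \<le> exp B" using norm_exp[of "g z"] z(2) by (meson exp_le_cancel_iff order_trans)
  qed
  show "\<exists>C R. \<forall>\<eta> \<xi>. \<bar>\<eta>\<bar> < r \<and> Complex \<eta> \<xi> \<in> U \<and> \<bar>\<xi>\<bar> \<ge> R \<longrightarrow>
           cmod (exp (g (Complex \<eta> \<xi>)) - 1) \<le> C / cmod (Complex \<eta> \<xi>) powr \<beta>"
  proof (rule exI[of _ "(3/2 + 2*(exp B + 1)) * B"], rule exI[of _ 1], intro allI impI)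
    fix \<eta> \<xi> assume "\<bar>\<eta>\<bar> < r \<and> Complex \<eta> \<xi> \<in> U \<and> 1 \<le> \<bar>\<xi>\<bar>"
    then have in_U: "Complex \<eta> \<xi> \<in> U" and \<eta>: "\<bar>\<eta>\<bar> < 1" and \<xi>: "1 \<le> \<bar>\<xi>\<bar>" using r by auto
    have "cmod (g (Complex \<eta> \<xi>)) \<le> B * (1+\<bar>\<xi>\<bar>) powr (-\<beta>)" using bound[OF in_U] by simp
    then show "cmod (exp (g (Complex \<eta> \<xi>)) - 1) \<le> (3/2 + 2*(exp B + 1)) * B / cmod (Complex \<eta> \<xi>) powr \<beta>"
      by (rule norm_exp_minus_one_decay[OF _ B \<beta> \<eta> \<xi>])
  qed
qed

lemma exp_wiener_hopf_factorization:
  fixes f \<psi> :: "complex \<Rightarrow> complex" and a c r R D \<alpha> \<beta> :: real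
  assumes hol: "f holomorphic_on strip a" and c: "0 < c" "c < a" and r: "r \<le> 1"
    and fexp: "\<And>z. z \<in> strip a \<Longrightarrow> exp (f z) = \<psi> z"
    and far: "\<And>z. z \<in> strip a \<Longrightarrow> R \<le> \<bar>Im z\<bar> \<Longrightarrow> cmod (f z) \<le> D * \<bar>Im z\<bar> powr (-\<alpha>)"
    and R: "1 \<le> R" and D: "0 \<le> D" and exps: "0 < \<beta>" "\<beta> < \<alpha>" "\<alpha> \<le> 1"
  shows "\<exists>\<psi>m \<psi>p :: complex \<Rightarrow> complex.
           (\<forall>z\<in>strip c. \<psi> z = \<psi>m z * \<psi>p z) \<and>
           \<psi>m holomorphic_on {z. Re z < c/2} \<and>
           bounded (\<psi>m ` {z. Re z < c/2}) \<and>
           (\<forall>z. Re z < c/2 \<longrightarrow> \<psi>m z \<noteq> 0) \<and>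
           \<psi>p holomorphic_on {z. Re z > -c/2} \<and>
           bounded (\<psi>p ` {z. Re z > -c/2}) \<and>
           (\<forall>z. Re z > -c/2 \<longrightarrow> \<psi>p z \<noteq> 0) \<and>
           (\<exists>C R. \<forall>\<eta> \<xi>. \<bar>\<eta>\<bar> < r \<and> \<eta> < c/2 \<and> \<bar>\<xi>\<bar> \<ge> R \<longrightarrow>
               cmod (\<psi>m (Complex \<eta> \<xi>) - 1) \<le> C / cmod (Complex \<eta> \<xi>) powr \<beta>) \<and>
           (\<exists>C R. \<forall>\<eta> \<xi>. \<bar>\<eta>\<bar> < r \<and> \<eta> > -c/2 \<and> \<bar>\<xi>\<bar> \<ge> R \<longrightarrow>
               cmod (\<psi>p (Complex \<eta> \<xi>) - 1) \<le> C / cmod (Complex \<eta> \<xi>) powr \<beta>)"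
proof -
  obtain g h where split: "\<And>z. z \<in> strip c \<Longrightarrow> f z = g z + h z"
    and holg: "g holomorphic_on {z. Re z < c/2}" and holh: "h holomorphic_on {z. Re z > -c/2}"
    and gB: "\<exists>B\<ge>0. \<forall>z. Re z < c/2 \<longrightarrow> cmod (g z) \<le> B * (1+\<bar>Im z\<bar>) powr (-\<beta>)"
    and hB: "\<exists>B\<ge>0. \<forall>z. Re z > -c/2 \<longrightarrow> cmod (h z) \<le> B * (1+\<bar>Im z\<bar>) powr (-\<beta>)"
    using additive_decomposition[OF hol c far R D exps] by auto
  obtain Bg where "0 \<le> Bg" "\<And>z. z \<in> {z. Re z < c/2} \<Longrightarrow> cmod (g z) \<le> Bg * (1+\<bar>Im z\<bar>) powr (-\<beta>)"
    using gB by auto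
  note gexp = exp_factor_bounds[where U = "{z. Re z < c/2}", OF this(1) exps(1) r this(2)]
  obtain Bh where "0 \<le> Bh" "\<And>z. z \<in> {z. Re z > -c/2} \<Longrightarrow> cmod (h z) \<le> Bh * (1+\<bar>Im z\<bar>) powr (-\<beta>)"
    using hB by auto
  note hexp = exp_factor_bounds[where U = "{z. Re z > -c/2}", OF this(1) exps(1) r this(2)]
  have factor: "\<psi> z = exp (g z) * exp (h z)" if z: "z \<in> strip c" for z
  proof -
    have "z \<in> strip a" using z c by (auto simp: strip_def)
    then show ?thesis using fexp split[OF z] by (metis exp_add)
  qed
  show ?thesis
    by (rule exI[of _ "\<lambda>z. exp (g z)"], rule exI[of _ "\<lambda>z. exp (h z)"])
       (use factor gexp hexp holg holh in \<open>auto intro!: holomorphic_intros\<close>)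
qed

lemma continuous_log_eq_Ln_plus_const:
  fixes L g :: "complex \<Rightarrow> complex"
  assumes T: "connected T" and cL: "continuous_on T L" and cg: "continuous_on T g"
    and eq: "\<And>z. z \<in> T \<Longrightarrow> exp (L z) = g z" and near: "\<And>z. z \<in> T \<Longrightarrow> cmod (g z - 1) < 1/2"
  shows "\<exists>k::int. \<forall>z\<in>T. L z = Ln (g z) + 2 * of_int k * pi * \<i>"
proof (cases "T = {}")
  case True then show ?thesis by auto
next
  case False
  then obtain z0 where z0: "z0 \<in> T" by auto
  have notneg: "g z \<notin> \<real>\<^sub>\<le>\<^sub>0" if "z \<in> T" for z
  proof
    assume "g z \<in> \<real>\<^sub>\<le>\<^sub>0"
    then have "Re (g z) \<le> 0" by (auto simp: nonpos_Reals_def)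
    moreover have "\<bar>Re (g z - 1)\<bar> < 1/2" using near[OF that] abs_Re_le_cmod[of "g z - 1"] by linarith
    ultimately show False by simp
  qed
  have ints: "\<exists>n::int. L z - Ln (g z) = 2 * of_int n * pi * \<i>" if "z \<in> T" for z
  proof -
    have gnz: "g z \<noteq> 0" using notneg[OF that] by auto
    have "exp (L z) = exp (Ln (g z))" using eq[OF that] gnz by simp
    then obtain n :: int where "L z = Ln (g z) + complex_of_real (real_of_int (2 * n) * pi) * \<i>"
      unfolding exp_eq by blast
    then show ?thesis by (intro exI[of _ n]) simp
  qed
  have cq: "continuous_on T (\<lambda>z. L z - Ln (g z))"
    by (intro continuous_intros cL continuous_on_compose2[OF continuous_on_Ln cg, of "g ` T"])
       (use notneg in auto)
  have "(\<lambda>z. L z - Ln (g z)) constant_on T"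
  proof (rule continuous_discrete_range_constant[OF T cq])
    fix x assume x: "x \<in> T"
    show "\<exists>e>0. \<forall>y. y \<in> T \<and> L y - Ln (g y) \<noteq> L x - Ln (g x) \<longrightarrow> e \<le> cmod (L y - Ln (g y) - (L x - Ln (g x)))"
    proof (intro exI[of _ 1] conjI allI impI)
      fix y assume y: "y \<in> T \<and> L y - Ln (g y) \<noteq> L x - Ln (g x)"
      obtain n where n: "L x - Ln (g x) = 2 * of_int n * pi * \<i>" using ints[OF x] by blast
      obtain m where m: "L y - Ln (g y) = 2 * of_int m * pi * \<i>" using ints y by blast
      have nm: "m \<noteq> n" using y n m by auto
      have "L y - Ln (g y) - (L x - Ln (g x)) = complex_of_real (2 * pi * real_of_int (m - n)) * \<i>"
        unfolding n m by (simp add: algebra_simps)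
      then have "cmod (L y - Ln (g y) - (L x - Ln (g x))) = \<bar>2 * pi * real_of_int (m - n)\<bar>"
        by (simp only: norm_mult norm_of_real norm_ii mult_1_right)
      then have "cmod (L y - Ln (g y) - (L x - Ln (g x))) = 2 * pi * \<bar>real_of_int (m - n)\<bar>"
        by (simp add: abs_mult)
      moreover have "1 \<le> \<bar>real_of_int (m - n)\<bar>" using nm by linarith
      moreover have "1 \<le> 2 * pi" using pi_gt3 by linarith
      ultimately show "1 \<le> cmod (L y - Ln (g y) - (L x - Ln (g x)))"
        by (smt (verit) mult_le_cancel_left1)
    qed simp
  qed
  then have const: "\<And>z. z \<in> T \<Longrightarrow> L z - Ln (g z) = L z0 - Ln (g z0)"
    using z0 unfolding constant_on_def by metis
  obtain k where k: "L z0 - Ln (g z0) = 2 * of_int k * pi * \<i>" using ints[OF z0] by blast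
  show ?thesis
    by (rule exI[of _ k]) (use const k in \<open>auto simp: algebra_simps\<close>)
qed

lemma tan_loop_param_at_right_0: "filterlim (\<lambda>s. tan (pi*(s - 1/2))) at_bot (at_right 0)"
proof (rule filterlim_compose[OF filterlim_tan_at_right])
  have "((\<lambda>s::real. pi*(s - 1/2)) \<longlongrightarrow> pi*(0 - 1/2)) (at_right 0)" by (intro tendsto_intros)
  then have t: "((\<lambda>s::real. pi*(s - 1/2)) \<longlongrightarrow> -(pi/2)) (at_right 0)" by simp
  have e: "\<forall>\<^sub>F s in at_right (0::real). pi*(s - 1/2) \<in> {-(pi/2)<..} \<and> pi*(s - 1/2) \<noteq> -(pi/2)"
    using eventually_at_right_real[of "0::real" 1] by (rule eventually_mono) (auto simp: algebra_simps)
  show "filterlim (\<lambda>s::real. pi*(s - 1/2)) (at_right (-(pi/2))) (at_right 0)"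
    unfolding filterlim_at using t e by blast
qed

lemma tan_loop_param_at_left_1: "filterlim (\<lambda>s. tan (pi*(s - 1/2))) at_top (at_left 1)"
proof (rule filterlim_compose[OF filterlim_tan_at_left])
  have "((\<lambda>s::real. pi*(s - 1/2)) \<longlongrightarrow> pi*(1 - 1/2)) (at_left 1)" by (intro tendsto_intros)
  then have t: "((\<lambda>s::real. pi*(s - 1/2)) \<longlongrightarrow> pi/2) (at_left 1)" by simp
  have e: "\<forall>\<^sub>F s in at_left (1::real). pi*(s - 1/2) \<in> {..<pi/2} \<and> pi*(s - 1/2) \<noteq> pi/2"
    using eventually_at_left_real[of 0 "1::real"] by (rule eventually_mono) (auto simp: algebra_simps)
  show "filterlim (\<lambda>s::real. pi*(s - 1/2)) (at_left (pi/2)) (at_left 1)"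
    unfolding filterlim_at using t e by blast
qed

lemma path_imag_axis_lift:
  fixes L :: "complex \<Rightarrow> complex" and l0 l1 :: complex
  assumes Lc: "continuous_on UNIV (\<lambda>\<xi>. L (Complex 0 \<xi>))"
    and top: "((\<lambda>\<xi>. L (Complex 0 \<xi>)) \<longlongrightarrow> l1) at_top"
    and bot: "((\<lambda>\<xi>. L (Complex 0 \<xi>)) \<longlongrightarrow> l0) at_bot"
  defines "p \<equiv> \<lambda>t. if t \<le> 0 then l0 else if t \<ge> 1 then l1 else L (Complex 0 (tan (pi * (t - 1/2))))"
  shows "path p"
  unfolding path_def
proof (rule continuous_on_IccI)
  have "\<forall>\<^sub>F s in at_right (0::real). 0 < s \<and> s < 1"
    using eventually_at_right_real[of "0::real" 1] by (rule eventually_mono) auto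
  then have "\<forall>\<^sub>F s in at_right 0. L (Complex 0 (tan (pi * (s - 1/2)))) = p s"
    by eventually_elim (auto simp: p_def)
  from Lim_transform_eventually[OF filterlim_compose[OF bot tan_loop_param_at_right_0] this]
  show "(p \<longlongrightarrow> p 0) (at_right 0)" by (simp add: p_def)
  have "\<forall>\<^sub>F s in at_left (1::real). 0 < s \<and> s < 1"
    using eventually_at_left_real[of 0 "1::real"] by (rule eventually_mono) auto
  then have "\<forall>\<^sub>F s in at_left 1. L (Complex 0 (tan (pi * (s - 1/2)))) = p s"
    by eventually_elim (auto simp: p_def)
  from Lim_transform_eventually[OF filterlim_compose[OF top tan_loop_param_at_left_1] this]
  show "(p \<longlongrightarrow> p 1) (at_left 1)" by (simp add: p_def)
  fix x :: real assume x: "0 < x" "x < 1"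
  have cosnz: "cos (pi * (x - 1/2)) \<noteq> 0"
  proof -
    have "-(pi/2) < pi * (x - 1/2)" "pi * (x - 1/2) < pi/2" using x by (auto simp: algebra_simps)
    then show ?thesis using cos_gt_zero_pi by force
  qed
  have "isCont (\<lambda>s. L (Complex 0 (tan (pi * (s - 1/2))))) x"
  proof (rule continuous_at_compose[where f = "\<lambda>s. tan (pi * (s - 1/2))" and g = "\<lambda>\<xi>. L (Complex 0 \<xi>)", unfolded o_def])
    show "isCont (\<lambda>s. tan (pi * (s - 1/2))) x" using cosnz by (intro continuous_intros) auto
    show "isCont (\<lambda>\<xi>. L (Complex 0 \<xi>)) (tan (pi * (x - 1/2)))"
      using Lc by (simp add: continuous_on_eq_continuous_at)
  qed
  moreover have "\<forall>\<^sub>F s in nhds x. p s = L (Complex 0 (tan (pi * (s - 1/2))))"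
  proof -
    have "\<forall>\<^sub>F s in nhds x. s \<in> {0<..<1}" using x by (intro eventually_nhds_in_open) auto
    then show ?thesis by eventually_elim (auto simp: p_def)
  qed
  ultimately show "(p \<longlongrightarrow> p x) (at x)"
    using isCont_cong by (metis isCont_def)
qed simp

lemma log_branches_eq_if_winding_number_zero:
  fixes \<psi> L :: "complex \<Rightarrow> complex" and R :: real and kp km :: int
  assumes Lc: "continuous_on UNIV (\<lambda>\<xi>. L (Complex 0 \<xi>))"
    and expL: "\<And>\<xi>. exp (L (Complex 0 \<xi>)) = \<psi> (Complex 0 \<xi>)"
    and kp: "\<And>\<xi>. R \<le> \<xi> \<Longrightarrow> L (Complex 0 \<xi>) = Ln (\<psi> (Complex 0 \<xi>)) + 2 * of_int kp * pi * \<i>"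
    and km: "\<And>\<xi>. \<xi> \<le> -R \<Longrightarrow> L (Complex 0 \<xi>) = Ln (\<psi> (Complex 0 \<xi>)) + 2 * of_int km * pi * \<i>"
    and ltop: "((\<lambda>\<xi>. \<psi> (Complex 0 \<xi>)) \<longlongrightarrow> 1) at_top"
    and lbot: "((\<lambda>\<xi>. \<psi> (Complex 0 \<xi>)) \<longlongrightarrow> 1) at_bot"
    and wind: "winding_number (imag_axis_loop \<psi>) 0 = 0"
  shows "kp = km"
proof -
  have "((\<lambda>\<xi>. Ln (\<psi> (Complex 0 \<xi>)) + 2 * of_int kp * pi * \<i>) \<longlongrightarrow> Ln 1 + 2 * of_int kp * pi * \<i>) at_top"
    by (intro tendsto_intros ltop) auto
  moreover have "\<forall>\<^sub>F \<xi> in at_top. Ln (\<psi> (Complex 0 \<xi>)) + 2 * of_int kp * pi * \<i> = L (Complex 0 \<xi>)"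
    using eventually_ge_at_top[of R] by eventually_elim (simp add: kp)
  ultimately have top: "((\<lambda>\<xi>. L (Complex 0 \<xi>)) \<longlongrightarrow> 2 * of_int kp * pi * \<i>) at_top"
    unfolding Ln_1 add_0_left by (rule Lim_transform_eventually)
  have "((\<lambda>\<xi>. Ln (\<psi> (Complex 0 \<xi>)) + 2 * of_int km * pi * \<i>) \<longlongrightarrow> Ln 1 + 2 * of_int km * pi * \<i>) at_bot"
    by (intro tendsto_intros lbot) auto
  moreover have "\<forall>\<^sub>F \<xi> in at_bot. Ln (\<psi> (Complex 0 \<xi>)) + 2 * of_int km * pi * \<i> = L (Complex 0 \<xi>)"
    using eventually_le_at_bot[of "-R"] by eventually_elim (simp add: km)
  ultimately have bot: "((\<lambda>\<xi>. L (Complex 0 \<xi>)) \<longlongrightarrow> 2 * of_int km * pi * \<i>) at_bot"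
    unfolding Ln_1 add_0_left by (rule Lim_transform_eventually)
  define p where "p t = (if t \<le> 0 then 2 * of_int km * pi * \<i> else if t \<ge> 1 then 2 * of_int kp * pi * \<i>
                        else L (Complex 0 (tan (pi * (t - 1/2)))))" for t :: real
  have "path p" unfolding p_def[abs_def] by (rule path_imag_axis_lift[OF Lc top bot])
  have e1: "exp (2 * (of_int k :: complex) * (of_real pi :: complex) * \<i>) = 1" for k :: int
    using exp_integer_2pi[of "of_int k :: real"] by (simp add: mult_ac)
  have "exp \<circ> p = imag_axis_loop \<psi>"
    by (rule ext) (auto simp: p_def imag_axis_loop_def e1 expL)
  then have "winding_number (imag_axis_loop \<psi>) 0 = (p 1 - p 0) / (2 * of_real pi * \<i>)"
    using winding_number_compose_exp[OF \<open>path p\<close>] by (simp add: pathstart_def pathfinish_def)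
  also have "\<dots> = of_int kp - of_int km"
    by (simp add: p_def field_simps)
  finally show ?thesis using wind by simp
qed

lemma zero_free_substrip:
  fixes \<psi> :: "complex \<Rightarrow> complex" and \<epsilon> R :: real
  assumes eps: "0 < \<epsilon>" and hol: "\<psi> holomorphic_on strip \<epsilon>"
    and nozero: "\<forall>\<xi>. \<psi> (Complex 0 \<xi>) \<noteq> 0"
    and Rb: "\<And>z. z \<in> strip \<epsilon> \<Longrightarrow> R \<le> \<bar>Im z\<bar> \<Longrightarrow> cmod (\<psi> z - 1) < 1/2"
  shows "\<exists>a. 0 < a \<and> a \<le> \<epsilon>/2 \<and> (\<forall>z\<in>strip a. \<psi> z \<noteq> 0)"
proof -
  define K where "K = cbox (Complex (-\<epsilon>/2) (-R)) (Complex (\<epsilon>/2) R)"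
  have KS: "K \<subseteq> strip \<epsilon>" using eps by (auto simp: K_def in_cbox_complex_iff strip_def)
  have cK: "continuous_on K \<psi>"
    using holomorphic_on_imp_continuous_on[OF hol] continuous_on_subset KS by blast
  define Z where "Z = {z \<in> K. \<psi> z = 0}"
  have "closed Z" unfolding Z_def by (rule continuous_closed_preimage_constant[OF cK]) (simp add: K_def closed_cbox)
  then have cZ: "compact Z"
  proof -
    have "Z = K \<inter> Z" by (auto simp: Z_def)
    then show ?thesis using compact_Int_closed[OF _ \<open>closed Z\<close>, of K] by (simp add: K_def)
  qed
  have nz_far: "\<psi> z \<noteq> 0" if "\<bar>Re z\<bar> < \<epsilon>" "R \<le> \<bar>Im z\<bar>" for z
    using Rb[of z] that by (auto simp: strip_def)
  show ?thesis
  proof (cases "Z = {}")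
    case True
    show ?thesis
    proof (intro exI conjI ballI)
      fix z assume "z \<in> strip (\<epsilon>/2)"
      then have z: "\<bar>Re z\<bar> < \<epsilon>/2" by (simp add: strip_def)
      show "\<psi> z \<noteq> 0"
      proof (cases "R \<le> \<bar>Im z\<bar>")
        case True then show ?thesis using nz_far z by auto
      next
        case False
        then have "z \<in> K" using z by (auto simp: K_def in_cbox_complex_iff)
        then show ?thesis using \<open>Z = {}\<close> by (auto simp: Z_def)
      qed
    qed (use eps in auto)
  next
    case False
    have "continuous_on Z (\<lambda>z. \<bar>Re z\<bar>)" by (intro continuous_intros)
    from continuous_attains_inf[OF cZ False this]
    obtain z0 where z0: "z0 \<in> Z" "\<And>z. z \<in> Z \<Longrightarrow> \<bar>Re z0\<bar> \<le> \<bar>Re z\<bar>" by blast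
    have m: "0 < \<bar>Re z0\<bar>"
    proof (rule ccontr)
      assume "\<not> 0 < \<bar>Re z0\<bar>"
      then have "z0 = Complex 0 (Im z0)" by (simp add: complex_eq_iff)
      then show False using z0(1) nozero by (auto simp: Z_def) (metis)
    qed
    show ?thesis
    proof (intro exI[of _ "min \<bar>Re z0\<bar> (\<epsilon>/2)"] conjI ballI)
      fix z assume "z \<in> strip (min \<bar>Re z0\<bar> (\<epsilon>/2))"
      then have z: "\<bar>Re z\<bar> < min \<bar>Re z0\<bar> (\<epsilon>/2)" by (simp add: strip_def)
      show "\<psi> z \<noteq> 0"
      proof (cases "R \<le> \<bar>Im z\<bar>")
        case True then show ?thesis using nz_far z by auto
      next
        case False
        then have zK: "z \<in> K" using z by (auto simp: K_def in_cbox_complex_iff)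
        show ?thesis
        proof
          assume "\<psi> z = 0"
          then have "z \<in> Z" using zK by (auto simp: Z_def)
          then show False using z0(2) z by fastforce
        qed
      qed
    qed (use eps m in auto)
  qed
qed

lemma tendsto_imag_axis:
  fixes \<psi> :: "complex \<Rightarrow> complex" and \<epsilon> :: real
  assumes eps: "0 < \<epsilon>"
    and lim1: "\<forall>d>0. \<exists>R. \<forall>\<eta> \<xi>. \<bar>\<eta>\<bar> < \<epsilon> \<and> \<bar>\<xi>\<bar> \<ge> R \<longrightarrow> cmod (\<psi> (Complex \<eta> \<xi>) - 1) < d"
  shows "((\<lambda>\<xi>. \<psi> (Complex 0 \<xi>)) \<longlongrightarrow> 1) at_top" "((\<lambda>\<xi>. \<psi> (Complex 0 \<xi>)) \<longlongrightarrow> 1) at_bot"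
proof -
  show "((\<lambda>\<xi>. \<psi> (Complex 0 \<xi>)) \<longlongrightarrow> 1) at_top"
  proof (rule tendstoI)
    fix e :: real assume e: "0 < e"
    obtain R where R: "\<forall>\<eta> \<xi>. \<bar>\<eta>\<bar> < \<epsilon> \<and> \<bar>\<xi>\<bar> \<ge> R \<longrightarrow> cmod (\<psi> (Complex \<eta> \<xi>) - 1) < e"
      using lim1 e by blast
    show "\<forall>\<^sub>F \<xi> in at_top. dist (\<psi> (Complex 0 \<xi>)) 1 < e"
      unfolding eventually_at_top_linorder
      by (rule exI[of _ "\<bar>R\<bar>"]) (use R eps in \<open>auto simp: dist_norm\<close>)
  qed
  show "((\<lambda>\<xi>. \<psi> (Complex 0 \<xi>)) \<longlongrightarrow> 1) at_bot"
  proof (rule tendstoI)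
    fix e :: real assume e: "0 < e"
    obtain R where R: "\<forall>\<eta> \<xi>. \<bar>\<eta>\<bar> < \<epsilon> \<and> \<bar>\<xi>\<bar> \<ge> R \<longrightarrow> cmod (\<psi> (Complex \<eta> \<xi>) - 1) < e"
      using lim1 e by blast
    show "\<forall>\<^sub>F \<xi> in at_bot. dist (\<psi> (Complex 0 \<xi>)) 1 < e"
      unfolding eventually_at_bot_linorder
      by (rule exI[of _ "-\<bar>R\<bar>"]) (use R eps in \<open>auto simp: dist_norm\<close>)
  qed
qed

lemma holomorphic_log_on_strip:
  fixes \<psi> :: "complex \<Rightarrow> complex" and a R :: real
  assumes a: "0 < a" and hol: "\<psi> holomorphic_on strip a" and nz: "\<And>z. z \<in> strip a \<Longrightarrow> \<psi> z \<noteq> 0"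
    and near: "\<And>z. z \<in> strip a \<Longrightarrow> R \<le> \<bar>Im z\<bar> \<Longrightarrow> cmod (\<psi> z - 1) < 1/2"
    and ltop: "((\<lambda>\<xi>. \<psi> (Complex 0 \<xi>)) \<longlongrightarrow> 1) at_top"
    and lbot: "((\<lambda>\<xi>. \<psi> (Complex 0 \<xi>)) \<longlongrightarrow> 1) at_bot"
    and wind: "winding_number (imag_axis_loop \<psi>) 0 = 0"
  obtains f where "f holomorphic_on strip a" and "\<And>z. z \<in> strip a \<Longrightarrow> exp (f z) = \<psi> z"
    and "\<And>z. z \<in> strip a \<Longrightarrow> R \<le> \<bar>Im z\<bar> \<Longrightarrow> f z = Ln (\<psi> z)"
proof -
  define S where "S = strip a"
  obtain L where holL: "L holomorphic_on S" and expL: "\<And>z. z \<in> S \<Longrightarrow> \<psi> z = exp (L z)"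
    using contractible_imp_holomorphic_log[OF hol convex_imp_contractible[OF convex_strip]] nz
    unfolding S_def by blast
  have contL: "continuous_on S L" using holL holomorphic_on_imp_continuous_on by blast
  have contpsi: "continuous_on S \<psi>" using hol holomorphic_on_imp_continuous_on S_def by blast
  define Tp where "Tp = S \<inter> {z. Im z \<ge> R}"
  define Tm where "Tm = S \<inter> {z. Im z \<le> -R}"
  have TS: "Tp \<subseteq> S" "Tm \<subseteq> S" by (auto simp: Tp_def Tm_def)
  have Tnear: "cmod (\<psi> z - 1) < 1/2" if "z \<in> Tp \<union> Tm" for z
    using near that by (auto simp: Tp_def Tm_def S_def)
  have "connected Tp" unfolding Tp_def S_def
    by (intro convex_connected convex_Int convex_strip convex_halfspace_Im_ge)
  from continuous_log_eq_Ln_plus_const[OF this continuous_on_subset[OF contL TS(1)] continuous_on_subset[OF contpsi TS(1)]]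
  obtain kp :: int where kp: "\<And>z. z \<in> Tp \<Longrightarrow> L z = Ln (\<psi> z) + 2 * of_int kp * pi * \<i>"
    using expL TS Tnear by (metis (no_types, lifting) UnI1 subsetD)
  have "connected Tm" unfolding Tm_def S_def
    by (intro convex_connected convex_Int convex_strip convex_halfspace_Im_le)
  from continuous_log_eq_Ln_plus_const[OF this continuous_on_subset[OF contL TS(2)] continuous_on_subset[OF contpsi TS(2)]]
  obtain km :: int where km: "\<And>z. z \<in> Tm \<Longrightarrow> L z = Ln (\<psi> z) + 2 * of_int km * pi * \<i>"
    using expL TS Tnear by (metis (no_types, lifting) UnI2 subsetD)
  have axS: "Complex 0 \<xi> \<in> S" for \<xi> using a by (simp add: S_def strip_def)
  have "kp = km"
  proof (rule log_branches_eq_if_winding_number_zero[of L \<psi> R kp km])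
    show "continuous_on UNIV (\<lambda>\<xi>. L (Complex 0 \<xi>))"
      by (rule continuous_on_compose2[OF contL]) (auto intro!: continuous_intros simp: axS)
    show "exp (L (Complex 0 \<xi>)) = \<psi> (Complex 0 \<xi>)" for \<xi> using expL axS by simp
    show "L (Complex 0 \<xi>) = Ln (\<psi> (Complex 0 \<xi>)) + 2 * of_int kp * pi * \<i>" if "R \<le> \<xi>" for \<xi>
      using kp that axS by (simp add: Tp_def)
    show "L (Complex 0 \<xi>) = Ln (\<psi> (Complex 0 \<xi>)) + 2 * of_int km * pi * \<i>" if "\<xi> \<le> -R" for \<xi>
      using km that axS by (simp add: Tm_def)
  qed (use ltop lbot wind in auto)
  show ?thesis
  proof
    show "(\<lambda>z. L z - 2 * of_int kp * pi * \<i>) holomorphic_on strip a"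
      using holL unfolding S_def by (intro holomorphic_intros)
    have e1: "exp (complex_of_real (2 * real_of_int k * pi) * \<i>) = 1" for k :: int
      using exp_integer_2pi[of "of_int k :: real"] by (simp add: mult_ac)
    show "exp (L z - 2 * of_int kp * pi * \<i>) = \<psi> z" if "z \<in> strip a" for z
      using expL[of z] that e1[of kp] by (simp add: S_def exp_diff)
    show "L z - 2 * of_int kp * pi * \<i> = Ln (\<psi> z)" if "z \<in> strip a" "R \<le> \<bar>Im z\<bar>" for z
    proof (cases "Im z \<ge> 0")
      case True
      then have "z \<in> Tp" using that by (auto simp: Tp_def S_def)
      then show ?thesis using kp by simp
    next
      case False
      then have "z \<in> Tm" using that by (auto simp: Tm_def S_def)
      then show ?thesis using km \<open>kp = km\<close> by simp
    qed
  qed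
qed

lemma log_decay:
  fixes f \<psi> :: "complex \<Rightarrow> complex" and a R \<alpha> :: real
  assumes Ln: "\<And>z. z \<in> strip a \<Longrightarrow> R \<le> \<bar>Im z\<bar> \<Longrightarrow> f z = Ln (\<psi> z)"
    and near: "\<And>z. z \<in> strip a \<Longrightarrow> R \<le> \<bar>Im z\<bar> \<Longrightarrow> cmod (\<psi> z - 1) < 1/2"
    and decay: "\<exists>C R1. \<forall>z\<in>strip a. R1 \<le> cmod z \<longrightarrow> cmod (\<psi> z - 1) \<le> C / cmod z powr \<alpha>"
    and \<alpha>: "0 < \<alpha>"
  obtains D R' where "0 \<le> D" "1 \<le> R'"
    "\<And>z. z \<in> strip a \<Longrightarrow> R' \<le> \<bar>Im z\<bar> \<Longrightarrow> cmod (f z) \<le> D * \<bar>Im z\<bar> powr (-\<alpha>)"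
proof -
  obtain C R1 where dec: "\<And>z. z \<in> strip a \<Longrightarrow> R1 \<le> cmod z \<Longrightarrow> cmod (\<psi> z - 1) \<le> C / cmod z powr \<alpha>"
    using decay by blast
  show ?thesis
  proof (rule that[of "2 * \<bar>C\<bar>" "max R (max R1 1)"])
    fix z assume z: "z \<in> strip a" and Im: "max R (max R1 1) \<le> \<bar>Im z\<bar>"
    have Imz: "\<bar>Im z\<bar> \<le> cmod z" by (rule abs_Im_le_cmod)
    have "cmod (\<psi> z - 1) \<le> C / cmod z powr \<alpha>" using dec[OF z] Im Imz by simp
    also have "\<dots> \<le> \<bar>C\<bar> * cmod z powr (-\<alpha>)" by (simp add: powr_minus divide_simps abs_ge_self)
    also have "\<dots> \<le> \<bar>C\<bar> * \<bar>Im z\<bar> powr (-\<alpha>)"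
      by (intro mult_left_mono powr_mono2') (use \<alpha> Im Imz in auto)
    finally have "cmod (\<psi> z - 1) \<le> \<bar>C\<bar> * \<bar>Im z\<bar> powr (-\<alpha>)" .
    moreover have "cmod (f z) \<le> 2 * cmod (\<psi> z - 1)"
      using norm_Ln_le[OF near[OF z]] Ln[OF z] Im by simp
    ultimately show "cmod (f z) \<le> 2 * \<bar>C\<bar> * \<bar>Im z\<bar> powr (-\<alpha>)" by simp
  qed auto
qed

theorem lemma4p3:
  fixes \<psi> :: "complex \<Rightarrow> complex" and \<epsilon> \<delta> :: real
  assumes eps: "0 < \<epsilon>" "\<epsilon> < 1"
    and C2: "C2 \<epsilon> \<psi>"
    and nozero: "\<forall>\<xi>. \<psi> (Complex 0 \<xi>) \<noteq> 0"
    and lim1: "\<forall>d>0. \<exists>R. \<forall>\<eta> \<xi>. \<bar>\<eta>\<bar> < \<epsilon> \<and> \<bar>\<xi>\<bar> \<ge> R \<longrightarrow> cmod (\<psi> (Complex \<eta> \<xi>) - 1) < d"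
    and wind: "winding_number (imag_axis_loop \<psi>) 0 = 0"
    and delta: "0 < \<delta>" "\<delta> \<le> 1/2"
    and decay: "\<exists>C R. \<forall>z\<in>strip \<epsilon>. cmod z \<ge> R \<longrightarrow> cmod (\<psi> z - 1) \<le> C / cmod z powr (1/2 + \<delta>)"
  shows "\<exists>\<epsilon>'. 0 < \<epsilon>' \<and> \<epsilon>' < \<epsilon> \<and>
          (\<exists>\<psi>m \<psi>p :: complex \<Rightarrow> complex.
             (\<forall>z\<in>strip \<epsilon>'. \<psi> z = \<psi>m z * \<psi>p z) \<and>
             \<psi>m holomorphic_on {z. Re z < \<epsilon>'/2} \<and>
             bounded (\<psi>m ` {z. Re z < \<epsilon>'/2}) \<and>
             (\<forall>z. Re z < \<epsilon>'/2 \<longrightarrow> \<psi>m z \<noteq> 0) \<and>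
             \<psi>p holomorphic_on {z. Re z > -\<epsilon>'/2} \<and>
             bounded (\<psi>p ` {z. Re z > -\<epsilon>'/2}) \<and>
             (\<forall>z. Re z > -\<epsilon>'/2 \<longrightarrow> \<psi>p z \<noteq> 0) \<and>
             (\<exists>C R. \<forall>\<eta> \<xi>. \<bar>\<eta>\<bar> < \<epsilon>'/\<epsilon> \<and> \<eta> < \<epsilon>'/2 \<and> \<bar>\<xi>\<bar> \<ge> R \<longrightarrow>
                 cmod (\<psi>m (Complex \<eta> \<xi>) - 1) \<le> C / cmod (Complex \<eta> \<xi>) powr ((1 + \<delta>)/2)) \<and>
             (\<exists>C R. \<forall>\<eta> \<xi>. \<bar>\<eta>\<bar> < \<epsilon>'/\<epsilon> \<and> \<eta> > -\<epsilon>'/2 \<and> \<bar>\<xi>\<bar> \<ge> R \<longrightarrow>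
                 cmod (\<psi>p (Complex \<eta> \<xi>) - 1) \<le> C / cmod (Complex \<eta> \<xi>) powr ((1 + \<delta>)/2)))"
proof -
  have exps: "0 < (1 + \<delta>)/2" "(1 + \<delta>)/2 < 1/2 + \<delta>" "1/2 + \<delta> \<le> 1" using delta by auto
  have hol: "\<psi> holomorphic_on strip \<epsilon>" by (rule C2_holomorphic[OF C2])
  obtain R where R: "\<forall>\<eta> \<xi>. \<bar>\<eta>\<bar> < \<epsilon> \<and> \<bar>\<xi>\<bar> \<ge> R \<longrightarrow> cmod (\<psi> (Complex \<eta> \<xi>) - 1) < 1/2"
    using lim1 by (meson divide_pos_pos zero_less_one zero_less_numeral)
  have near: "cmod (\<psi> z - 1) < 1/2" if "z \<in> strip \<epsilon>" "R \<le> \<bar>Im z\<bar>" for z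
    using R[rule_format, of "Re z" "Im z"] that by (simp add: strip_def)
  obtain a where a: "0 < a" "a \<le> \<epsilon>/2" and nz: "\<forall>z\<in>strip a. \<psi> z \<noteq> 0"
    using zero_free_substrip[OF eps(1) hol nozero near] by blast
  have sub: "strip a \<subseteq> strip \<epsilon>" using a by (auto simp: strip_def)
  then have near': "\<And>z. z \<in> strip a \<Longrightarrow> R \<le> \<bar>Im z\<bar> \<Longrightarrow> cmod (\<psi> z - 1) < 1/2"
    using near by blast
  obtain f where holf: "f holomorphic_on strip a" and fexp: "\<And>z. z \<in> strip a \<Longrightarrow> exp (f z) = \<psi> z"
    and fLn: "\<And>z. z \<in> strip a \<Longrightarrow> R \<le> \<bar>Im z\<bar> \<Longrightarrow> f z = Ln (\<psi> z)"
    using holomorphic_log_on_strip[OF a(1) holomorphic_on_subset[OF hol sub] nz[rule_format] near'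
        tendsto_imag_axis[OF eps(1) lim1] wind] by blast
  have decay_a: "\<exists>C R1. \<forall>z\<in>strip a. R1 \<le> cmod z \<longrightarrow> cmod (\<psi> z - 1) \<le> C / cmod z powr (1/2 + \<delta>)"
    using decay sub by blast
  obtain D R' where D: "0 \<le> D" and R': "1 \<le> R'"
    and far: "\<And>z. z \<in> strip a \<Longrightarrow> R' \<le> \<bar>Im z\<bar> \<Longrightarrow> cmod (f z) \<le> D * \<bar>Im z\<bar> powr (-(1/2 + \<delta>))"
    by (rule log_decay[where f = f and \<psi> = \<psi> and a = a and R = R, OF fLn near' decay_a]) (use exps in auto)
  define c where "c = a/2"
  have c: "0 < c" "c < a" "c < \<epsilon>" "c/\<epsilon> \<le> 1" using a eps by (auto simp: c_def field_simps)
  show ?thesis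
    using c exp_wiener_hopf_factorization[OF holf c(1,2) c(4) fexp far R' D exps] by blast
qed

end
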